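(* Let $\Delta^\tau<\Delta$, let $\pi$ be a policy for the $\Delta$-delayed task with Q-function $Q$, and $\pi^\tau$ a policy for the $\Delta^\tau$-delayed task with Q-function $Q^\tau$, and suppose $Q^\tau$ is $L_Q$-Lipschitz continuous. Then for every $x_t\in\mathcal X$, $$\mathbb E_{a_t\sim\pi(\cdot|x_t),\;x^\tau_t\sim b_\Delta(\cdot|x_t)}\big[Q^\tau(x^\tau_t,a_t)-Q(x_t,a_t)\big]\le\frac{\gamma L_Q}{1-\gamma}\,\mathbb E_{a_t\sim\pi(\cdot|x_t),\;x_{t+1}\sim\mathcal P_\Delta(\cdot|x_t,a_t),\;\hat x\sim d^\pi_{x_{t+1}},\;\hat x^\tau\sim b_\Delta(\cdot|\hat x)}\big[\mathcal W_1\big(\pi^\tau(\cdot|\hat x^\tau)\,\|\,\pi(\cdot|\hat x)\big)\big].$$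
   Context: Let $(\mathcal S,\mathcal A,\mathcal P,\mathcal R,\gamma)$ be an MDP with state space $\mathcal S$, action space $\mathcal A$ equipped with a metric $d_{\mathcal A}$, transition kernel $\mathcal P(\cdot|s,a)$, bounded reward $\mathcal R:\mathcal S\times\mathcal A\to\mathbb R$ and discount factor $\gamma\in(0,1)$. For a delay $\Delta\in\mathbb N$, the augmented state space is $\mathcal X=\mathcal S\times\mathcal A^\Delta$, with elements $x_t=(s_{t-\Delta},a_{t-\Delta},\dots,a_{t-1})$. The constant delayed MDP (CDMDP) with delay $\Delta$ has transition kernel $\mathcal P_\Delta(\cdot|x_t,a_t)$: the next augmented state is $x_{t+1}=(s_{t-\Delta+1},a_{t-\Delta+1},\dots,a_{t-1},a_t)$ with $s_{t-\Delta+1}\sim\mathcal P(\cdot|s_{t-\Delta},a_{t-\Delta})$; its reward is $\mathcal R_\Delta(x_t,a_t)=\mathbb E_{s_t\sim b(\cdot|x_t)}[\mathcal R(s_t,a_t)]$, where $b(\cdot|x_t)$ is the law of $s_t$ obtained from $s_{t-\Delta}$ by successively sampling $s_{t-\Delta+i+1}\sim\mathcal P(\cdot|s_{t-\Delta+i},a_{t-\Delta+i})$ for $i=0,\dots,\Delta-1$. For an auxiliary delay $\Delta^\tau\in\mathbb N$ with $\Delta^\tau<\Delta$, define analogously $\mathcal X^\tau=\mathcal S\times\mathcal A^{\Delta^\tau}$, the kernel $\mathcal P_{\Delta^\tau}$ and the reward $\mathcal R_\tau:=\mathcal R_{\Delta^\tau}$. The delayed belief $b_\Delta(\cdot|x_t)$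 is the distribution on $\mathcal X^\tau$ of $x^\tau_t=(s_{t-\Delta^\tau},a_{t-\Delta^\tau},\dots,a_{t-1})$, where the actions are copied from $x_t$ and $s_{t-\Delta^\tau}$ is obtained from $s_{t-\Delta}$ by successively sampling $s_{t-\Delta+i+1}\sim\mathcal P(\cdot|s_{t-\Delta+i},a_{t-\Delta+i})$ for $i=0,\dots,\Delta-\Delta^\tau-1$. A policy for the $\Delta$-delayed task is a Markov kernel $\pi(\cdot|x)$ on $\mathcal A$, $x\in\mathcal X$; its value functions $V(x)$, $Q(x,a)$ are the expected infinite-horizon discounted sums $\sum_{t\ge0}\gamma^t\mathcal R_\Delta(x_t,a_t)$ in the $\Delta$-CDMDP following $\pi$. A policy $\pi^\tau$ for the $\Delta^\tau$-delayed task is a kernel on $\mathcal A$ indexed by $\mathcal X^\tau$, with value functions $V^\tau,Q^\tau$ defined analogously in the $\Delta^\tau$-CDMDP with reward $\mathcal R_\tau$. $d^\pi_x(\cdot)=(1-\gamma)\sum_{i\ge0}\gamma^i\Pr(x_i\in\cdot\mid x_0=x)$ is the normalized discounted augmented-state visitation distribution under $\pi$ in the $\Delta$-CDMDP. "$Q^\tau$ is $L_Q$-Lipschitz continuous" means in particular $|Q^\tau(x^\tau,a_1)-Q^\tau(x^\tau,a_2)|\le L_Q\,d_{\mathcal A}(a_1,a_2)$ for all $x^\tau,a_1,a_2$. $\mathcal W_1$ is the $L^1$-Wasserstein distance on probability distributions on $\mathcal A$ with respect to $d_{\mathcal A}$. *)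

theory Defs
  imports "HOL-Probability.Probability"
begin

text \<open>Augmented state space S x A^n. Action tuples (a_{t-n},...,a_{t-1}) are encoded
  as extensional functions on {..<n} (index i holds a_{t-n+i}).\<close>

definition act_space :: "nat \<Rightarrow> (nat \<Rightarrow> 'a::metric_space) measure" where
  "act_space n = PiM {..<n} (\<lambda>_. borel)"

definition aug_space :: "'s measure \<Rightarrow> nat \<Rightarrow> ('s \<times> (nat \<Rightarrow> 'a::metric_space)) measure" where
  "aug_space S n = S \<Otimes>\<^sub>M act_space n"

primrec roll :: "'s measure \<Rightarrow> ('s \<Rightarrow> 'a \<Rightarrow> 's measure) \<Rightarrow> 's \<Rightarrow> (nat \<Rightarrow> 'a) \<Rightarrow> nat \<Rightarrow> 's measure" where
  "roll S P s as 0 = return S s"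
| "roll S P s as (Suc k) = bind (roll S P s as k) (\<lambda>s'. P s' (as k))"

text \<open>Belief b(.|x) for delay n: law of s_t given x_t = (s_{t-n}, a_{t-n},...,a_{t-1}).\<close>
definition belief :: "'s measure \<Rightarrow> ('s \<Rightarrow> 'a \<Rightarrow> 's measure) \<Rightarrow> nat
    \<Rightarrow> ('s \<times> (nat \<Rightarrow> 'a)) \<Rightarrow> 's measure" where
  "belief S P n x = roll S P (fst x) (snd x) n"

definition delayed_belief :: "'s measure \<Rightarrow> ('s \<Rightarrow> 'a::metric_space \<Rightarrow> 's measure) \<Rightarrow> nat \<Rightarrow> nat
    \<Rightarrow> ('s \<times> (nat \<Rightarrow> 'a)) \<Rightarrow> ('s \<times> (nat \<Rightarrow> 'a)) measure" where
  "delayed_belief S P n m x =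
     distr (roll S P (fst x) (snd x) (n - m)) (aug_space S m)
       (\<lambda>s'. (s', restrict (\<lambda>i. snd x (i + (n - m))) {..<m}))"

definition cd_reward :: "'s measure \<Rightarrow> ('s \<Rightarrow> 'a \<Rightarrow> 's measure) \<Rightarrow> ('s \<Rightarrow> 'a \<Rightarrow> real) \<Rightarrow> nat
    \<Rightarrow> ('s \<times> (nat \<Rightarrow> 'a)) \<Rightarrow> 'a \<Rightarrow> real" where
  "cd_reward S P R n x a = (\<integral>s. R s a \<partial>belief S P n x)"

text \<open>Transition kernel P_n of the n-CDMDP: with the extended action sequence
  (a_{t-n},...,a_{t-1},a_t), the oldest state is advanced by the oldest action and
  the new action is appended.\<close>
definition ext_act :: "nat \<Rightarrow> (nat \<Rightarrow> 'a) \<Rightarrow> 'a \<Rightarrow> nat \<Rightarrow> 'a" where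
  "ext_act n as a i = (if i < n then as i else a)"

definition cd_kernel :: "'s measure \<Rightarrow> ('s \<Rightarrow> 'a::metric_space \<Rightarrow> 's measure) \<Rightarrow> nat
    \<Rightarrow> ('s \<times> (nat \<Rightarrow> 'a)) \<Rightarrow> 'a \<Rightarrow> ('s \<times> (nat \<Rightarrow> 'a)) measure" where
  "cd_kernel S P n x a =
     distr (P (fst x) (ext_act n (snd x) a 0)) (aug_space S n)
       (\<lambda>s'. (s', restrict (\<lambda>i. ext_act n (snd x) a (i + 1)) {..<n}))"

definition sa_step :: "'s measure \<Rightarrow> ('s \<Rightarrow> 'a::metric_space \<Rightarrow> 's measure) \<Rightarrow> nat
    \<Rightarrow> (('s \<times> (nat \<Rightarrow> 'a)) \<Rightarrow> 'a measure)
    \<Rightarrow> ('s \<times> (nat \<Rightarrow> 'a)) \<times> 'a \<Rightarrow> (('s \<times> (nat \<Rightarrow> 'a)) \<times> 'a) measure" where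
  "sa_step S P n pol xa =
     bind (cd_kernel S P n (fst xa) (snd xa))
       (\<lambda>x'. distr (pol x') (aug_space S n \<Otimes>\<^sub>M borel) (\<lambda>a'. (x', a')))"

primrec traj :: "'s measure \<Rightarrow> ('s \<Rightarrow> 'a::metric_space \<Rightarrow> 's measure) \<Rightarrow> nat
    \<Rightarrow> (('s \<times> (nat \<Rightarrow> 'a)) \<Rightarrow> 'a measure) \<Rightarrow> (('s \<times> (nat \<Rightarrow> 'a)) \<times> 'a) measure
    \<Rightarrow> nat \<Rightarrow> (('s \<times> (nat \<Rightarrow> 'a)) \<times> 'a) measure" where
  "traj S P n pol mu0 0 = mu0"
| "traj S P n pol mu0 (Suc i) = bind (traj S P n pol mu0 i) (sa_step S P n pol)"

definition Q_fun :: "'s measure \<Rightarrow> ('s \<Rightarrow> 'a::metric_space \<Rightarrow> 's measure) \<Rightarrow> ('s \<Rightarrow> 'a \<Rightarrow> real)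
    \<Rightarrow> real \<Rightarrow> nat \<Rightarrow> (('s \<times> (nat \<Rightarrow> 'a)) \<Rightarrow> 'a measure)
    \<Rightarrow> ('s \<times> (nat \<Rightarrow> 'a)) \<Rightarrow> 'a \<Rightarrow> real" where
  "Q_fun S P R \<gamma> n pol x a =
     (\<Sum>i. \<gamma> ^ i * (\<integral>xa. cd_reward S P R n (fst xa) (snd xa)
         \<partial>traj S P n pol (return (aug_space S n \<Otimes>\<^sub>M borel) (x, a)) i))"

definition state_law :: "'s measure \<Rightarrow> ('s \<Rightarrow> 'a::metric_space \<Rightarrow> 's measure) \<Rightarrow> nat
    \<Rightarrow> (('s \<times> (nat \<Rightarrow> 'a)) \<Rightarrow> 'a measure) \<Rightarrow> ('s \<times> (nat \<Rightarrow> 'a)) \<Rightarrow> nat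
    \<Rightarrow> ('s \<times> (nat \<Rightarrow> 'a)) measure" where
  "state_law S P n pol x i =
     distr (traj S P n pol (distr (pol x) (aug_space S n \<Otimes>\<^sub>M borel) (\<lambda>a. (x, a))) i)
       (aug_space S n) fst"

text \<open>Normalized discounted visitation d^pi_x = (1-gamma) sum_i gamma^i Pr(x_i \<in> . | x_0 = x),
  written as the mixture of the laws of x_i with geometric weights (1-gamma) gamma^i.\<close>
definition visitation :: "'s measure \<Rightarrow> ('s \<Rightarrow> 'a::metric_space \<Rightarrow> 's measure) \<Rightarrow> real \<Rightarrow> nat
    \<Rightarrow> (('s \<times> (nat \<Rightarrow> 'a)) \<Rightarrow> 'a measure) \<Rightarrow> ('s \<times> (nat \<Rightarrow> 'a))
    \<Rightarrow> ('s \<times> (nat \<Rightarrow> 'a)) measure" where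
  "visitation S P \<gamma> n pol x =
     bind (measure_pmf (geometric_pmf (1 - \<gamma>))) (\<lambda>i. state_law S P n pol x i)"

definition couplings :: "'a::metric_space measure \<Rightarrow> 'a measure \<Rightarrow> ('a \<times> 'a) measure set" where
  "couplings \<mu> \<nu> = {c. prob_space c \<and> sets c = sets (borel \<Otimes>\<^sub>M borel)
                       \<and> distr c borel fst = \<mu> \<and> distr c borel snd = \<nu>}"

definition wasserstein1 :: "'a::metric_space measure \<Rightarrow> 'a measure \<Rightarrow> ennreal" where
  "wasserstein1 \<mu> \<nu> = (INF c \<in> couplings \<mu> \<nu>. \<integral>\<^sup>+ p. ennreal (dist (fst p) (snd p)) \<partial>c)"

end

(*
  Write D(x, a) for the mean of Q^tau(x^tau, a) - Q(x, a) over x^tau ~ b_Delta(x). The delayed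
  belief is consistent with both delayed MDPs: averaged over it, the Delta^tau-reward is the
  Delta-reward, and drawing x^tau ~ b_Delta(x) and then stepping the Delta^tau-CDMDP gives the same
  law as stepping the Delta-CDMDP and then drawing from b_Delta. Subtracting the two Bellman
  equations therefore yields the recursion D(x, a) = gamma E[w(x') + D(x', a')] with
  x' ~ P_Delta(x, a) and a' ~ pi(x'), where w(x') is the mean over x^tau ~ b_Delta(x') of
  V^tau(x^tau) - E_{a ~ pi(x')} Q^tau(x^tau, a). Unrolling the recursion writes E_{a ~ pi(x)} D(x, a)
  as sum_j gamma^(j+1) E[w(x_(j+1))], which is gamma / (1 - gamma) times the mean of w under the
  discounted visitation from x_1. Finally w <= L_Q E_{b_Delta} W_1(pi^tau, pi) by the easy direction
  of Kantorovich-Rubinstein duality, since Q^tau(x^tau, .) is L_Q-Lipschitz.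
*)

theory Submission
  imports Defs
begin

type_synonym ('s, 'a) aug_state = "'s \<times> (nat \<Rightarrow> 'a)"

lemma prob_algebra_memberD:
  assumes "M \<in> space (prob_algebra N)"
  shows "prob_space M" "sets M = sets N" "space M = space N"
proof -
  have h: "prob_space M \<and> sets M = sets N" using assms by (simp add: space_prob_algebra)
  then show "prob_space M" "sets M = sets N" by auto
  show "space M = space N" using h sets_eq_imp_space_eq by blast
qed

lemma AE_kernel_emeasure_le_1:
  assumes "\<And>y. y \<in> space M \<Longrightarrow> K y \<in> space (prob_algebra N)"
  shows "AE y in M. emeasure (K y) (space (K y)) \<le> ennreal 1"
proof (rule AE_I2)
  fix y assume "y \<in> space M"
  from prob_algebra_memberD(1)[OF assms[OF this]] show "emeasure (K y) (space (K y)) \<le> ennreal 1"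
    by (simp add: prob_space.emeasure_space_1)
qed

lemma prob_space_integral_abs_le:
  fixes f :: "'x \<Rightarrow> real"
  assumes "prob_space M" "f \<in> borel_measurable M" "\<And>x. x \<in> space M \<Longrightarrow> \<bar>f x\<bar> \<le> C"
  shows "abs (\<integral>x. f x \<partial>M) \<le> C"
proof -
  interpret prob_space M by fact
  have "integrable M f" using assms by (intro integrable_const_bound[where B=C]) auto
  then have "(\<integral>x. \<bar>f x\<bar> \<partial>M) \<le> C" using assms by (intro integral_le_const) auto
  then show ?thesis using integral_abs_bound[of M f] by linarith
qed

lemma prob_space_integrable_bounded:
  fixes f :: "'x \<Rightarrow> real"
  assumes "prob_space M" "f \<in> borel_measurable M" "\<And>x. x \<in> space M \<Longrightarrow> \<bar>f x\<bar> \<le> C"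
  shows "integrable M f"
proof -
  interpret prob_space M by fact
  show ?thesis using assms by (intro integrable_const_bound[where B=C]) auto
qed

lemma measurable_integral_kernel:
  fixes f :: "'x \<times> 'y \<Rightarrow> real"
  assumes f: "f \<in> borel_measurable (M \<Otimes>\<^sub>M N)" and K: "K \<in> M \<rightarrow>\<^sub>M prob_algebra N"
  shows "(\<lambda>x. \<integral>y. f (x, y) \<partial>K x) \<in> borel_measurable M"
proof -
  have pair_kernel: "(\<lambda>x. distr (K x) (M \<Otimes>\<^sub>M N) (\<lambda>y. (x, y))) \<in> M \<rightarrow>\<^sub>M prob_algebra (M \<Otimes>\<^sub>M N)"
    by (rule measurable_distr_prob_space2[OF K]) simp
  have m: "(\<lambda>x. \<integral>z. f z \<partial>distr (K x) (M \<Otimes>\<^sub>M N) (\<lambda>y. (x, y))) \<in> borel_measurable M"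
    by (rule measurable_compose[OF measurable_prob_algebraD[OF pair_kernel] integral_measurable_subprob_algebra[OF f]])
  show ?thesis
  proof (rule measurable_cong[THEN iffD1, OF _ m])
    fix x assume x: "x \<in> space M"
    have sK: "sets (K x) = sets N" using measurable_space[OF K x] by (simp add: space_prob_algebra)
    have "(\<lambda>y. (x, y)) \<in> K x \<rightarrow>\<^sub>M M \<Otimes>\<^sub>M N"
      using x by (simp add: measurable_cong_sets[OF sK refl])
    then show "(\<integral>z. f z \<partial>distr (K x) (M \<Otimes>\<^sub>M N) (\<lambda>y. (x, y))) = (\<integral>y. f (x, y) \<partial>K x)"
      by (rule integral_distr) (rule f)
  qed
qed

lemma prob_algebra_integrable_bounded:
  fixes f :: "'x \<Rightarrow> real"
  assumes M: "M \<in> space (prob_algebra N)" and f: "f \<in> borel_measurable N"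
    and bound: "\<And>x. x \<in> space N \<Longrightarrow> \<bar>f x\<bar> \<le> C"
  shows "integrable M f" and "\<bar>\<integral>x. f x \<partial>M\<bar> \<le> C"
proof -
  note M' = prob_algebra_memberD[OF M]
  have "f \<in> borel_measurable M" using f by (simp add: measurable_cong_sets[OF M'(2) refl])
  then show "integrable M f" and "\<bar>\<integral>x. f x \<partial>M\<bar> \<le> C"
    using bound M'(1,3) by (auto intro: prob_space_integrable_bounded prob_space_integral_abs_le)
qed

lemma ennreal_integral_le_nn_integral:
  fixes k :: "'x \<Rightarrow> real"
  assumes "integrable M k"
  shows "ennreal (\<integral>x. k x \<partial>M) \<le> (\<integral>\<^sup>+x. ennreal (k x) \<partial>M)"
proof -
  have im: "integrable M (\<lambda>x. max 0 (k x))" using assms by auto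
  have "(\<integral>x. k x \<partial>M) \<le> (\<integral>x. max 0 (k x) \<partial>M)"
    by (rule integral_mono[OF assms im]) auto
  then have "ennreal (\<integral>x. k x \<partial>M) \<le> ennreal (\<integral>x. max 0 (k x) \<partial>M)" by (rule ennreal_leI)
  also have "\<dots> = (\<integral>\<^sup>+x. ennreal (max 0 (k x)) \<partial>M)"
    by (rule nn_integral_eq_integral[symmetric, OF im]) auto
  also have "\<dots> = (\<integral>\<^sup>+x. ennreal (k x) \<partial>M)"
    by (simp add: ennreal_max_0)
  finally show ?thesis .
qed

lemma wasserstein1_ge_integral_diff:
  fixes f :: "'a::metric_space \<Rightarrow> real"
  assumes L: "0 < L" and lip: "L-lipschitz_on UNIV f" and fb: "\<And>a. \<bar>f a\<bar> \<le> C"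
    and mu: "\<mu> \<in> space (prob_algebra borel)" and nu: "\<nu> \<in> space (prob_algebra borel)"
  shows "ennreal (((\<integral>a. f a \<partial>\<mu>) - (\<integral>a. f a \<partial>\<nu>)) / L) \<le> wasserstein1 \<mu> \<nu>"
  unfolding wasserstein1_def
proof (rule INF_greatest)
  fix c assume "c \<in> couplings \<mu> \<nu>"
  then have c: "prob_space c" "sets c = sets (borel \<Otimes>\<^sub>M borel)" "distr c borel fst = \<mu>" "distr c borel snd = \<nu>"
    by (auto simp: couplings_def)
  have fm: "f \<in> borel_measurable borel"
    by (rule borel_measurable_continuous_onI) (rule lipschitz_on_continuous_on[OF lip])
  have fstm: "fst \<in> c \<rightarrow>\<^sub>M borel" and sndm: "snd \<in> c \<rightarrow>\<^sub>M borel"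
    by (simp_all add: measurable_cong_sets[OF c(2) refl])
  have i1: "(\<integral>a. f a \<partial>\<mu>) = (\<integral>p. f (fst p) \<partial>c)"
    unfolding c(3)[symmetric] by (rule integral_distr[OF fstm fm])
  have i2: "(\<integral>a. f a \<partial>\<nu>) = (\<integral>p. f (snd p) \<partial>c)"
    unfolding c(4)[symmetric] by (rule integral_distr[OF sndm fm])
  have int1: "integrable c (\<lambda>p. f (fst p))"
    by (rule prob_space_integrable_bounded[OF c(1), where C=C]) (auto intro: measurable_compose[OF fstm fm] fb)
  have int2: "integrable c (\<lambda>p. f (snd p))"
    by (rule prob_space_integrable_bounded[OF c(1), where C=C]) (auto intro: measurable_compose[OF sndm fm] fb)
  have eqr: "((\<integral>a. f a \<partial>\<mu>) - (\<integral>a. f a \<partial>\<nu>)) / L = (\<integral>p. (f (fst p) - f (snd p)) / L \<partial>c)"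
    unfolding i1 i2 by (simp add: Bochner_Integration.integral_diff[OF int1 int2])
  have "ennreal (((\<integral>a. f a \<partial>\<mu>) - (\<integral>a. f a \<partial>\<nu>)) / L) = ennreal (\<integral>p. (f (fst p) - f (snd p)) / L \<partial>c)"
    using eqr by (rule arg_cong)
  also have "\<dots> \<le> (\<integral>\<^sup>+p. ennreal ((f (fst p) - f (snd p)) / L) \<partial>c)"
    by (rule ennreal_integral_le_nn_integral) (intro integrable_divide Bochner_Integration.integrable_diff int1 int2)
  also have "\<dots> \<le> (\<integral>\<^sup>+p. ennreal (dist (fst p) (snd p)) \<partial>c)"
  proof (rule nn_integral_mono)
    fix p :: "'a \<times> 'a"
    have "dist (f (fst p)) (f (snd p)) \<le> L * dist (fst p) (snd p)"
      using lip by (auto simp: lipschitz_on_def)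
    then have "(f (fst p) - f (snd p)) / L \<le> dist (fst p) (snd p)"
      using L by (simp add: dist_real_def divide_simps abs_le_iff mult.commute)
    then show "ennreal ((f (fst p) - f (snd p)) / L) \<le> ennreal (dist (fst p) (snd p))"
      by (rule ennreal_leI)
  qed
  finally show "ennreal (((\<integral>a. f a \<partial>\<mu>) - (\<integral>a. f a \<partial>\<nu>)) / L) \<le> (\<integral>\<^sup>+p. ennreal (dist (fst p) (snd p)) \<partial>c)" .
qed

lemma integral_swap_bounded:
  fixes f :: "'x \<Rightarrow> 'y \<Rightarrow> real"
  assumes M1: "prob_space M1" and M2: "prob_space M2"
    and fm: "(\<lambda>p. f (fst p) (snd p)) \<in> borel_measurable (M1 \<Otimes>\<^sub>M M2)"
    and fb: "\<And>x y. x \<in> space M1 \<Longrightarrow> y \<in> space M2 \<Longrightarrow> \<bar>f x y\<bar> \<le> C"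
  shows "(\<integral>x. (\<integral>y. f x y \<partial>M2) \<partial>M1) = (\<integral>y. (\<integral>x. f x y \<partial>M1) \<partial>M2)"
proof -
  interpret pair_prob_space M1 M2
    using M1 M2 by (simp add: pair_prob_space_def pair_sigma_finite_def prob_space_imp_sigma_finite)
  have "integrable (M1 \<Otimes>\<^sub>M M2) (case_prod f)"
    by (rule prob_space_integrable_bounded[OF prob_space_pair[OF M1 M2], where C=C])
      (use fm fb in \<open>auto simp: space_pair_measure case_prod_beta'\<close>)
  then show ?thesis by (rule Fubini_integral[symmetric])
qed

lemma abs_max_0_divide_le:
  fixes t K L :: real
  assumes L: "0 < L" and t: "\<bar>t\<bar> \<le> K"
  shows "\<bar>max 0 (t / L)\<bar> \<le> K / L"
proof -
  have "t \<le> K" using t by linarith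
  then have a: "t / L \<le> K / L" using L by (intro divide_right_mono) auto
  have "0 \<le> K" using t by linarith
  then have b: "0 \<le> K / L" using L by simp
  show ?thesis using a b by simp
qed

lemma abs_power_mult_le:
  fixes \<gamma> c :: real
  assumes "0 \<le> \<gamma>" "\<bar>c\<bar> \<le> C"
  shows "\<bar>\<gamma> ^ i * c\<bar> \<le> C * \<gamma> ^ i"
  using assms by (simp add: abs_mult mult.commute mult_right_mono)

context
  fixes \<gamma> :: real
  assumes \<gamma>: "0 \<le> \<gamma>" "\<gamma> < 1"
begin

lemma summable_power_mult:
  assumes "\<And>i. \<bar>f i\<bar> \<le> C"
  shows "summable (\<lambda>i. \<gamma> ^ i * f i)"
proof (rule summable_comparison_test[where g="\<lambda>i. C * \<gamma> ^ i"])
  show "\<exists>N. \<forall>n\<ge>N. norm (\<gamma> ^ n * f n) \<le> C * \<gamma> ^ n"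
    using abs_power_mult_le[OF \<gamma>(1) assms] by auto
  show "summable (\<lambda>i. C * \<gamma> ^ i)" using \<gamma> by (intro summable_mult summable_geometric) auto
qed

lemma abs_suminf_power_mult_le:
  assumes "\<And>i. \<bar>f i\<bar> \<le> C"
  shows "\<bar>\<Sum>i. \<gamma> ^ i * f i\<bar> \<le> C / (1 - \<gamma>)"
proof -
  have geom: "summable (\<lambda>i. C * \<gamma> ^ i)" using \<gamma> by (intro summable_mult summable_geometric) auto
  have norm: "summable (\<lambda>i. norm (\<gamma> ^ i * f i))"
    by (rule summable_comparison_test[OF _ geom]) (use abs_power_mult_le[OF \<gamma>(1) assms] in auto)
  have "\<bar>\<Sum>i. \<gamma> ^ i * f i\<bar> \<le> (\<Sum>i. norm (\<gamma> ^ i * f i))"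
    using summable_norm[OF norm] by simp
  also have "\<dots> \<le> (\<Sum>i. C * \<gamma> ^ i)"
    by (intro suminf_le norm geom) (use abs_power_mult_le[OF \<gamma>(1) assms] in auto)
  also have "\<dots> = C / (1 - \<gamma>)"
    using \<gamma> by (simp add: suminf_mult suminf_geometric summable_geometric divide_simps)
  finally show ?thesis .
qed

lemma integral_suminf_power_mult:
  fixes f :: "nat \<Rightarrow> 'x \<Rightarrow> real"
  assumes M: "prob_space M" and f_meas: "\<And>i. f i \<in> borel_measurable M"
    and f_bound: "\<And>i x. x \<in> space M \<Longrightarrow> \<bar>f i x\<bar> \<le> C"
  shows "(\<integral>x. (\<Sum>i. \<gamma> ^ i * f i x) \<partial>M) = (\<Sum>i. \<gamma> ^ i * (\<integral>x. f i x \<partial>M))"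
proof -
  interpret prob_space M by fact
  have geom: "summable (\<lambda>i. C * \<gamma> ^ i)" using \<gamma> by (intro summable_mult summable_geometric) auto
  have term_bound: "\<bar>\<gamma> ^ i * f i x\<bar> \<le> C * \<gamma> ^ i" if "x \<in> space M" for i x
    by (rule abs_power_mult_le[OF \<gamma>(1) f_bound[OF that]])
  have "\<bar>\<gamma> ^ i * f i x\<bar> \<le> C" if "x \<in> space M" for i x
  proof -
    have "\<gamma> ^ i * \<bar>f i x\<bar> \<le> 1 * \<bar>f i x\<bar>"
      using \<gamma> by (intro mult_right_mono power_le_one) auto
    then show ?thesis using f_bound[OF that, of i] \<gamma> by (simp add: abs_mult)
  qed
  then have integrable: "integrable M (\<lambda>x. \<gamma> ^ i * f i x)" for i
    by (intro prob_space_integrable_bounded[OF M, where C=C] borel_measurable_times measurable_const f_meas) auto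
  have "(\<integral>x. (\<Sum>i. \<gamma> ^ i * f i x) \<partial>M) = (\<Sum>i. (\<integral>x. \<gamma> ^ i * f i x \<partial>M))"
  proof (rule integral_suminf[OF integrable])
    show "AE x in M. summable (\<lambda>i. norm (\<gamma> ^ i * f i x))"
      by (intro AE_I2 summable_comparison_test[OF _ geom]) (use term_bound in auto)
    have "norm (\<integral>x. norm (\<gamma> ^ i * f i x) \<partial>M) \<le> C * \<gamma> ^ i" for i
      using integral_le_const[of "\<lambda>x. norm (\<gamma> ^ i * f i x)" "C * \<gamma> ^ i"] integrable[of i] term_bound
      by auto
    then show "summable (\<lambda>i. \<integral>x. norm (\<gamma> ^ i * f i x) \<partial>M)"
      by (intro summable_comparison_test[OF _ geom]) auto
  qed
  then show ?thesis by simp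
qed

end

section \<open>Kernels of a delayed MDP\<close>

locale delayed_mdp =
  fixes S :: "'s measure" and P :: "'s \<Rightarrow> 'a::metric_space \<Rightarrow> 's measure"
    and R :: "'s \<Rightarrow> 'a \<Rightarrow> real" and \<gamma> B :: real
  assumes P_kernel: "(\<lambda>(s, a). P s a) \<in> S \<Otimes>\<^sub>M borel \<rightarrow>\<^sub>M prob_algebra S"
    and R_meas: "(\<lambda>(s, a). R s a) \<in> borel_measurable (S \<Otimes>\<^sub>M borel)"
    and R_bnd: "\<And>s a. \<bar>R s a\<bar> \<le> B"
    and discount: "0 < \<gamma>" "\<gamma> < 1"
begin

lemmas discount_range = less_imp_le[OF discount(1)] discount(2)

lemma measurable_P:
  assumes f: "f \<in> M \<rightarrow>\<^sub>M S" and g: "g \<in> M \<rightarrow>\<^sub>M borel"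
  shows "(\<lambda>z. P (f z) (g z)) \<in> M \<rightarrow>\<^sub>M prob_algebra S"
proof -
  have "(\<lambda>z. (f z, g z)) \<in> M \<rightarrow>\<^sub>M S \<Otimes>\<^sub>M borel" using f g by measurable
  from measurable_compose[OF this P_kernel] show ?thesis by simp
qed

lemma measurable_roll:
  assumes f: "f \<in> M \<rightarrow>\<^sub>M S" and g: "\<And>i. i < k \<Longrightarrow> (\<lambda>z. g z i) \<in> M \<rightarrow>\<^sub>M borel"
  shows "(\<lambda>z. roll S P (f z) (g z) k) \<in> M \<rightarrow>\<^sub>M prob_algebra S"
  using g
proof (induction k)
  case 0
  then show ?case using measurable_compose[OF f measurable_return_prob_space] by simp
next
  case (Suc k)
  have IH: "(\<lambda>z. roll S P (f z) (g z) k) \<in> M \<rightarrow>\<^sub>M prob_algebra S" using Suc by auto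
  have gk: "(\<lambda>z. g z k) \<in> M \<rightarrow>\<^sub>M borel" using Suc by auto
  have "(\<lambda>(z, s'). P s' (g z k)) \<in> M \<Otimes>\<^sub>M S \<rightarrow>\<^sub>M prob_algebra S"
    using measurable_P[of snd "M \<Otimes>\<^sub>M S" "\<lambda>p. g (fst p) k"] gk
    by (simp add: case_prod_beta' measurable_compose[OF measurable_fst gk])
  then show ?case
    by (simp add: measurable_bind_prob_space2[OF IH])
qed

lemma measurable_action: "i < n \<Longrightarrow> (\<lambda>x. snd x i) \<in> aug_space S n \<rightarrow>\<^sub>M (borel :: 'a measure)"
  unfolding aug_space_def act_space_def
  by (rule measurable_compose[OF measurable_snd measurable_component_singleton]) auto

lemma measurable_belief: "(\<lambda>x. belief S P n x) \<in> aug_space S n \<rightarrow>\<^sub>M prob_algebra S"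
  unfolding belief_def
  by (rule measurable_roll) (auto simp: aug_space_def intro: measurable_action[unfolded aug_space_def])

lemma measurable_ext_act:
  assumes "\<And>i. i < n \<Longrightarrow> (\<lambda>z. h z i) \<in> M \<rightarrow>\<^sub>M borel" "g \<in> M \<rightarrow>\<^sub>M borel"
  shows "(\<lambda>z. ext_act n (h z) (g z) j) \<in> M \<rightarrow>\<^sub>M borel"
  by (cases "j < n") (simp_all add: ext_act_def assms)

lemma measurable_aug_fst: "fst \<in> aug_space S n \<rightarrow>\<^sub>M S"
  unfolding aug_space_def by simp

lemma measurable_into_aug_space:
  assumes "f \<in> M \<rightarrow>\<^sub>M S" and "\<And>i. i < m \<Longrightarrow> (\<lambda>z. g z i) \<in> M \<rightarrow>\<^sub>M borel"
  shows "(\<lambda>z. (f z, restrict (g z) {..<m})) \<in> M \<rightarrow>\<^sub>M aug_space S m"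
  unfolding aug_space_def act_space_def using assms by (auto intro!: measurable_Pair measurable_restrict)

lemma measurable_cd_reward: "(\<lambda>z. cd_reward S P R n (fst z) (snd z)) \<in> borel_measurable (aug_space S n \<Otimes>\<^sub>M borel)"
proof -
  have K: "(\<lambda>z. belief S P n (fst z)) \<in> aug_space S n \<Otimes>\<^sub>M borel \<rightarrow>\<^sub>M prob_algebra S"
    by (rule measurable_compose[OF measurable_fst measurable_belief])
  have "(\<lambda>p. (snd p, snd (fst p))) \<in> (aug_space S n \<Otimes>\<^sub>M borel) \<Otimes>\<^sub>M S \<rightarrow>\<^sub>M S \<Otimes>\<^sub>M borel"
    by simp
  from measurable_compose[OF this R_meas]
  have f: "(\<lambda>p. R (snd p) (snd (fst p))) \<in> borel_measurable ((aug_space S n \<Otimes>\<^sub>M borel) \<Otimes>\<^sub>M S)"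
    by simp
  show ?thesis
    using measurable_integral_kernel[OF f K] by (simp add: cd_reward_def)
qed

lemma cd_reward_abs_le: "x \<in> space (aug_space S n) \<Longrightarrow> \<bar>cd_reward S P R n x a\<bar> \<le> B"
  unfolding cd_reward_def
proof (rule prob_space_integral_abs_le)
  assume x: "x \<in> space (aug_space S n)"
  have "belief S P n x \<in> space (prob_algebra S)" using measurable_space[OF measurable_belief x] .
  have "(\<lambda>s. (s, a)) \<in> S \<rightarrow>\<^sub>M S \<Otimes>\<^sub>M borel" by simp
  from measurable_compose[OF this R_meas] have "(\<lambda>s. R s a) \<in> borel_measurable S" by simp
  moreover note bf = prob_algebra_memberD[OF \<open>belief S P n x \<in> space (prob_algebra S)\<close>]
  ultimately show "prob_space (belief S P n x)" and "(\<lambda>s. R s a) \<in> borel_measurable (belief S P n x)"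
    by (simp_all add: measurable_cong_sets[OF bf(2) refl])
qed (rule R_bnd)

lemma measurable_cd_kernel:
  "(\<lambda>z. cd_kernel S P n (fst z) (snd z)) \<in> aug_space S n \<Otimes>\<^sub>M borel \<rightarrow>\<^sub>M prob_algebra (aug_space S n)"
  unfolding cd_kernel_def
proof (rule measurable_distr_prob_space2)
  show "(\<lambda>z. P (fst (fst z)) (ext_act n (snd (fst z)) (snd z) 0)) \<in> aug_space S n \<Otimes>\<^sub>M borel \<rightarrow>\<^sub>M prob_algebra S"
    by (rule measurable_P) (auto intro!: measurable_ext_act measurable_compose[OF measurable_fst measurable_action]
         measurable_compose[OF measurable_fst measurable_aug_fst])
  show "(\<lambda>(z, s'). (s', restrict (\<lambda>i. ext_act n (snd (fst z)) (snd z) (i + 1)) {..<n}))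
      \<in> (aug_space S n \<Otimes>\<^sub>M (borel :: 'a measure)) \<Otimes>\<^sub>M S \<rightarrow>\<^sub>M aug_space S n"
  proof -
    have action: "(\<lambda>p. snd (fst (fst p)) i) \<in> (aug_space S n \<Otimes>\<^sub>M (borel :: 'a measure)) \<Otimes>\<^sub>M S \<rightarrow>\<^sub>M (borel :: 'a measure)"
      if "i < n" for i
      by (rule measurable_compose[OF measurable_compose[OF measurable_fst measurable_fst] measurable_action[OF that]])
    show ?thesis
      unfolding case_prod_beta' by (intro measurable_into_aug_space measurable_ext_act action) auto
  qed
qed

lemma measurable_sa_step:
  assumes pol: "pol \<in> aug_space S n \<rightarrow>\<^sub>M prob_algebra borel"
  shows "sa_step S P n pol \<in> aug_space S n \<Otimes>\<^sub>M borel \<rightarrow>\<^sub>M prob_algebra (aug_space S n \<Otimes>\<^sub>M borel)"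
proof -
  have g: "(\<lambda>x'. distr (pol x') (aug_space S n \<Otimes>\<^sub>M borel) (\<lambda>a'. (x', a'))) \<in> aug_space S n \<rightarrow>\<^sub>M prob_algebra (aug_space S n \<Otimes>\<^sub>M borel)"
    by (rule measurable_distr_prob_space2[OF pol]) simp
  show ?thesis
    unfolding sa_step_def[abs_def]
    by (rule measurable_bind_prob_space[OF measurable_cd_kernel g])
qed

lemma measurable_delayed_belief:
  assumes "m \<le> n"
  shows "(\<lambda>x. delayed_belief S P n m x) \<in> aug_space S n \<rightarrow>\<^sub>M prob_algebra (aug_space S m)"
  unfolding delayed_belief_def
proof (rule measurable_distr_prob_space2)
  show "(\<lambda>x. roll S P (fst x) (snd x) (n - m)) \<in> aug_space S n \<rightarrow>\<^sub>M prob_algebra S"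
    by (rule measurable_roll) (auto intro!: measurable_aug_fst measurable_action)
  show "(\<lambda>(x :: 's \<times> (nat \<Rightarrow> 'a), s'). (s', restrict (\<lambda>i. snd x (i + (n - m))) {..<m}))
      \<in> aug_space S n \<Otimes>\<^sub>M S \<rightarrow>\<^sub>M aug_space S m"
    unfolding case_prod_beta' using assms
    by (intro measurable_into_aug_space measurable_snd measurable_compose[OF measurable_fst measurable_action]) auto
qed

lemma space_aug_space: "x \<in> space (aug_space S n) \<longleftrightarrow> fst x \<in> space S \<and> snd x \<in> space (act_space n)"
  unfolding aug_space_def by (cases x) (simp add: space_pair_measure)

lemma restrict_in_act_space: "restrict f {..<m} \<in> space (act_space m)"
  unfolding act_space_def by (simp add: space_PiM)

lemma measurable_Pair_actions: "c \<in> space (act_space m) \<Longrightarrow> (\<lambda>s'. (s', c)) \<in> S \<rightarrow>\<^sub>M aug_space S m"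
  unfolding aug_space_def by simp

lemma roll_cong: "(\<And>i. i < k \<Longrightarrow> as i = bs i) \<Longrightarrow> roll S P s as k = roll S P s bs k"
  by (induction k) auto

lemma measurable_roll_start: "(\<lambda>s. roll S P s as k) \<in> S \<rightarrow>\<^sub>M prob_algebra S"
  using measurable_roll[of "\<lambda>s. s" S k "\<lambda>_. as"] by simp

lemma roll_in_prob_algebra: "s \<in> space S \<Longrightarrow> roll S P s as k \<in> space (prob_algebra S)"
  by (rule measurable_space[OF measurable_roll_start])

lemma roll_prob:
  assumes "s \<in> space S"
  shows "prob_space (roll S P s as k)" "sets (roll S P s as k) = sets S" "space (roll S P s as k) = space S"
  using prob_algebra_memberD[OF roll_in_prob_algebra[OF assms, of as k]] by auto

lemma measurable_P_state: "(\<lambda>s. P s c) \<in> S \<rightarrow>\<^sub>M prob_algebra S"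
  using measurable_P[of "\<lambda>s. s" S "\<lambda>_. c"] by simp

lemma roll_add:
  assumes s: "s \<in> space S"
  shows "roll S P s as (j + k) = bind (roll S P s as j) (\<lambda>s'. roll S P s' (\<lambda>i. as (i + j)) k)"
proof (induction k)
  case 0
  have "bind (roll S P s as j) (\<lambda>s'. roll S P s' (\<lambda>i. as (i + j)) 0) = bind (roll S P s as j) (return S)"
    by simp
  also have "\<dots> = roll S P s as j" by (rule bind_return'') (rule roll_prob(2)[OF s])
  finally show ?case by simp
next
  case (Suc k)
  have "roll S P s as (j + Suc k) = bind (roll S P s as (j + k)) (\<lambda>s'. P s' (as (j + k)))" by simp
  also have "\<dots> = bind (bind (roll S P s as j) (\<lambda>s'. roll S P s' (\<lambda>i. as (i + j)) k)) (\<lambda>s'. P s' (as (j + k)))"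
    using Suc by simp
  also have "\<dots> = bind (roll S P s as j) (\<lambda>s'. bind (roll S P s' (\<lambda>i. as (i + j)) k) (\<lambda>s'. P s' (as (j + k))))"
    by (rule bind_assoc) (auto intro: measurable_prob_algebraD[OF measurable_roll_start] measurable_prob_algebraD[OF measurable_P_state]
        simp: measurable_cong_sets[OF roll_prob(2)[OF s] refl])
  also have "\<dots> = bind (roll S P s as j) (\<lambda>s'. roll S P s' (\<lambda>i. as (i + j)) (Suc k))"
    by (simp add: add.commute)
  finally show ?case .
qed

lemma roll_1: "s \<in> space S \<Longrightarrow> roll S P s as 1 = P s (as 0)"
  using bind_return[OF measurable_prob_algebraD[OF measurable_P_state[of "as 0"]]] by simp

lemma delayed_belief_prob:
  assumes "x \<in> space (aug_space S n)" "m \<le> n"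
  shows "prob_space (delayed_belief S P n m x)" "sets (delayed_belief S P n m x) = sets (aug_space S m)"
    "space (delayed_belief S P n m x) = space (aug_space S m)"
  using prob_algebra_memberD[OF measurable_space[OF measurable_delayed_belief[OF assms(2)] assms(1)]] by auto

lemma measurable_cd_kernel_state: "(\<lambda>x. cd_kernel S P n x a) \<in> aug_space S n \<rightarrow>\<^sub>M prob_algebra (aug_space S n)"
  using measurable_compose[OF _ measurable_cd_kernel, of "\<lambda>x. (x, a)"] by simp

lemma measurable_cd_kernel_action: "x \<in> space (aug_space S n) \<Longrightarrow> (\<lambda>a. cd_kernel S P n x a) \<in> borel \<rightarrow>\<^sub>M prob_algebra (aug_space S n)"
  using measurable_compose[OF _ measurable_cd_kernel, of "\<lambda>a. (x, a)" borel] by simp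

lemma cd_kernel_prob:
  assumes "x \<in> space (aug_space S n)"
  shows "prob_space (cd_kernel S P n x a)" "sets (cd_kernel S P n x a) = sets (aug_space S n)"
    "space (cd_kernel S P n x a) = space (aug_space S n)"
  using prob_algebra_memberD[OF measurable_space[OF measurable_cd_kernel_state assms]] by auto

lemma measurable_R_state: "(\<lambda>s. R s a) \<in> borel_measurable S"
  using measurable_compose[OF _ R_meas, of "\<lambda>s. (s, a)"] by simp

lemma measurable_cd_reward_state: "(\<lambda>x. cd_reward S P R n x a) \<in> borel_measurable (aug_space S n)"
  using measurable_compose[OF _ measurable_cd_reward, of "\<lambda>x. (x, a)"] by simp

lemma delayed_belief_cd_reward:
  assumes x: "x \<in> space (aug_space S n)" and mn: "m \<le> n"
  shows "(\<integral>xt. cd_reward S P R m xt a \<partial>delayed_belief S P n m x) = cd_reward S P R n x a"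
proof -
  obtain s as where xs: "x = (s, as)" by (cases x)
  have s: "s \<in> space S" using x space_aug_space[of x n] xs by simp
  define acts where "acts = restrict (\<lambda>i. as (i + (n - m))) {..<m}"
  have "(\<integral>xt. cd_reward S P R m xt a \<partial>delayed_belief S P n m x)
      = (\<integral>s'. cd_reward S P R m (s', acts) a \<partial>roll S P s as (n - m))"
    unfolding delayed_belief_def xs acts_def fst_conv snd_conv
    by (rule integral_distr) (auto simp: measurable_cong_sets[OF roll_prob(2)[OF s] refl]
        intro!: measurable_Pair_actions restrict_in_act_space measurable_cd_reward_state)
  also have "\<dots> = (\<integral>s'. (\<integral>s''. R s'' a \<partial>roll S P s' (\<lambda>i. as (i + (n - m))) m) \<partial>roll S P s as (n - m))"
  proof (rule Bochner_Integration.integral_cong[OF refl])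
    fix s'
    have rc: "roll S P s' acts m = roll S P s' (\<lambda>i. as (i + (n - m))) m"
      unfolding acts_def by (rule roll_cong) simp
    show "cd_reward S P R m (s', acts) a = (\<integral>s''. R s'' a \<partial>roll S P s' (\<lambda>i. as (i + (n - m))) m)"
      by (simp add: cd_reward_def belief_def rc)
  qed
  also have "\<dots> = (\<integral>s''. R s'' a \<partial>bind (roll S P s as (n - m)) (\<lambda>s'. roll S P s' (\<lambda>i. as (i + (n - m))) m))"
  proof (rule integral_bind[where B=B and K=S and B'=1, symmetric])
    show "(\<lambda>s'. roll S P s' (\<lambda>i. as (i + (n - m))) m) \<in> roll S P s as (n - m) \<rightarrow>\<^sub>M subprob_algebra S"
      by (simp add: measurable_cong_sets[OF roll_prob(2)[OF s] refl] measurable_prob_algebraD[OF measurable_roll_start])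
    show "finite_measure (roll S P s as (n - m))" using roll_prob(1)[OF s] prob_space_def by blast
    show "AE x in roll S P s as (n - m). emeasure (roll S P x (\<lambda>i. as (i + (n - m))) m) (space (roll S P x (\<lambda>i. as (i + (n - m))) m)) \<le> ennreal 1"
      by (rule AE_kernel_emeasure_le_1[where N=S]) (simp add: roll_prob(3)[OF s] roll_in_prob_algebra)
  qed (auto simp: measurable_R_state R_bnd)
  also have "\<dots> = cd_reward S P R n x a"
    unfolding cd_reward_def belief_def xs using roll_add[OF s, of as "n - m" m, symmetric] mn by simp
  finally show ?thesis .
qed

text \<open>The law of the next \<open>m\<close>-delayed state given \<open>x\<close> and \<open>a\<close>: it arises both by drawing
  from the delayed belief and then stepping the \<open>m\<close>-delayed MDP, and by stepping the
  \<open>n\<close>-delayed MDP and then drawing from the delayed belief.\<close>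

definition next_delayed_belief :: "nat \<Rightarrow> nat \<Rightarrow> ('s, 'a) aug_state \<Rightarrow> 'a \<Rightarrow> ('s, 'a) aug_state measure" where
  "next_delayed_belief n m x a =
     distr (roll S P (fst x) (ext_act n (snd x) a) (1 + (n - m))) (aug_space S m)
       (\<lambda>s'. (s', restrict (\<lambda>i. ext_act n (snd x) a (i + (n - m + 1))) {..<m}))"

lemma bind_delayed_belief_cd_kernel:
  assumes x: "x \<in> space (aug_space S n)" and mn: "m \<le> n"
  shows "bind (delayed_belief S P n m x) (\<lambda>xt. cd_kernel S P m xt a) = next_delayed_belief n m x a"
proof -
  obtain s as where xs: "x = (s, as)" by (cases x)
  have s: "s \<in> space S" using x space_aug_space[of x n] xs by simp
  define as' where "as' = ext_act n as a"
  define acts where "acts = restrict (\<lambda>i. as (i + (n - m))) {..<m}"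
  define g where "g = (\<lambda>s'' :: 's. (s'', restrict (\<lambda>i. as' (i + (n - m + 1))) {..<m}))"
  have gm: "g \<in> S \<rightarrow>\<^sub>M aug_space S m" unfolding g_def by (intro measurable_Pair_actions restrict_in_act_space)
  have roll_ext: "roll S P s as (n - m) = roll S P s as' (n - m)"
    by (rule roll_cong) (auto simp: as'_def ext_act_def)
  have "bind (delayed_belief S P n m x) (\<lambda>xt. cd_kernel S P m xt a)
      = bind (roll S P s as (n - m)) (\<lambda>s'. cd_kernel S P m (s', acts) a)"
    unfolding delayed_belief_def xs acts_def snd_conv fst_conv
  proof (rule bind_distr)
    show "(\<lambda>s'. (s', restrict (\<lambda>i. as (i + (n - m))) {..<m})) \<in> roll S P s as (n - m) \<rightarrow>\<^sub>M aug_space S m"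
      by (simp add: measurable_cong_sets[OF roll_prob(2)[OF s] refl] measurable_Pair_actions restrict_in_act_space)
    show "(\<lambda>xt. cd_kernel S P m xt a) \<in> aug_space S m \<rightarrow>\<^sub>M subprob_algebra (aug_space S m)"
      by (rule measurable_prob_algebraD[OF measurable_cd_kernel_state])
    show "space (roll S P s as (n - m)) \<noteq> {}" using roll_prob(3)[OF s] s by auto
  qed
  also have "\<dots> = bind (roll S P s as (n - m)) (\<lambda>s'. distr (P s' (as' (n - m))) (aug_space S m) g)"
  proof (rule bind_cong[OF refl])
    fix s' assume "s' \<in> space (roll S P s as (n - m))"
    have e0: "ext_act m acts a 0 = as' (n - m)"
      using mn by (auto simp: ext_act_def acts_def as'_def)
    have e1: "restrict (\<lambda>i. ext_act m acts a (i + 1)) {..<m} = restrict (\<lambda>i. as' (i + (n - m + 1))) {..<m}"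
    proof -
      have le: "\<And>x. m \<le> x + n" using mn by auto
      show ?thesis using mn by (auto simp: ext_act_def acts_def as'_def restrict_def fun_eq_iff Suc_diff_le le)
    qed
    show "cd_kernel S P m (s', acts) a = distr (P s' (as' (n - m))) (aug_space S m) g"
      unfolding cd_kernel_def g_def fst_conv snd_conv e0 e1 ..
  qed
  also have "\<dots> = distr (bind (roll S P s as (n - m)) (\<lambda>s'. P s' (as' (n - m)))) (aug_space S m) g"
    by (rule distr_bind[where K=S, symmetric]) (use s gm in \<open>auto simp: measurable_cong_sets[OF roll_prob(2)[OF s] refl]
        roll_prob(3)[OF s] intro: measurable_prob_algebraD[OF measurable_P_state]\<close>)
  also have "bind (roll S P s as (n - m)) (\<lambda>s'. P s' (as' (n - m))) = roll S P s as' (1 + (n - m))"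
    by (simp add: roll_ext)
  finally show ?thesis by (simp add: next_delayed_belief_def xs as'_def g_def)
qed

lemma bind_cd_kernel_delayed_belief:
  assumes x: "x \<in> space (aug_space S n)" and mn: "m \<le> n"
  shows "bind (cd_kernel S P n x a) (delayed_belief S P n m) = next_delayed_belief n m x a"
proof -
  obtain s as where xs: "x = (s, as)" by (cases x)
  have s: "s \<in> space S" using x space_aug_space[of x n] xs by simp
  define as' where "as' = ext_act n as a"
  define g where "g = (\<lambda>s'' :: 's. (s'', restrict (\<lambda>i. as' (i + (n - m + 1))) {..<m}))"
  have gm: "g \<in> S \<rightarrow>\<^sub>M aug_space S m" unfolding g_def by (intro measurable_Pair_actions restrict_in_act_space)
  define k where "k = (\<lambda>s' :: 's. (s', restrict (\<lambda>i. as' (i + 1)) {..<n}))"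
  have km: "k \<in> S \<rightarrow>\<^sub>M aug_space S n" unfolding k_def by (intro measurable_Pair_actions restrict_in_act_space)
  have P0: "P s (as' 0) \<in> space (prob_algebra S)" by (rule measurable_space[OF measurable_P_state s])
  have "bind (cd_kernel S P n x a) (delayed_belief S P n m) = bind (P s (as' 0)) (\<lambda>s'. delayed_belief S P n m (k s'))"
    unfolding cd_kernel_def xs fst_conv snd_conv as'_def[symmetric] k_def[symmetric]
  proof (rule bind_distr)
    show "k \<in> P s (as' 0) \<rightarrow>\<^sub>M aug_space S n"
      using km by (simp add: measurable_cong_sets[OF prob_algebra_memberD(2)[OF P0] refl])
    show "delayed_belief S P n m \<in> aug_space S n \<rightarrow>\<^sub>M subprob_algebra (aug_space S m)"
      using measurable_prob_algebraD[OF measurable_delayed_belief[OF mn]] by simp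
    show "space (P s (as' 0)) \<noteq> {}" using prob_algebra_memberD(3)[OF P0] s by auto
  qed
  also have "\<dots> = bind (P s (as' 0)) (\<lambda>s'. distr (roll S P s' (\<lambda>i. as' (i + 1)) (n - m)) (aug_space S m) g)"
  proof (rule bind_cong[OF refl])
    fix s' assume "s' \<in> space (P s (as' 0))"
    have r: "roll S P s' (restrict (\<lambda>i. as' (i + 1)) {..<n}) (n - m) = roll S P s' (\<lambda>i. as' (i + 1)) (n - m)"
      by (rule roll_cong) auto
    have restrict_shift: "restrict (\<lambda>i. restrict (\<lambda>i. as' (i + 1)) {..<n} (i + (n - m))) {..<m}
        = restrict (\<lambda>i. as' (i + (n - m + 1))) {..<m}"
      using mn by (auto simp: restrict_def fun_eq_iff)
    show "delayed_belief S P n m (k s') = distr (roll S P s' (\<lambda>i. as' (i + 1)) (n - m)) (aug_space S m) g"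
      unfolding delayed_belief_def k_def g_def fst_conv snd_conv r restrict_shift ..
  qed
  also have "\<dots> = distr (bind (P s (as' 0)) (\<lambda>s'. roll S P s' (\<lambda>i. as' (i + 1)) (n - m))) (aug_space S m) g"
    by (rule distr_bind[where K=S, symmetric]) (insert s, auto simp: measurable_cong_sets[OF prob_algebra_memberD(2)[OF P0] refl]
        measurable_prob_algebraD[OF measurable_roll_start] prob_algebra_memberD(3)[OF P0] gm)
  also have "bind (P s (as' 0)) (\<lambda>s'. roll S P s' (\<lambda>i. as' (i + 1)) (n - m)) = roll S P s as' (1 + (n - m))"
    using roll_add[OF s, of as' 1 "n - m"] roll_1[OF s, of as'] by simp
  finally show ?thesis by (simp add: next_delayed_belief_def xs as'_def g_def)
qed

lemma delayed_belief_cd_kernel_commute: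
  assumes "x \<in> space (aug_space S n)" and "m \<le> n"
  shows "bind (delayed_belief S P n m x) (\<lambda>xt. cd_kernel S P m xt a)
       = bind (cd_kernel S P n x a) (delayed_belief S P n m)"
  using bind_delayed_belief_cd_kernel[OF assms] bind_cd_kernel_delayed_belief[OF assms] by simp

end

section \<open>Trajectories and the Bellman equation of a policy\<close>

locale delayed_mdp_policy = delayed_mdp S P R \<gamma> B for S :: "'s measure" and P :: "'s \<Rightarrow> 'a::metric_space \<Rightarrow> 's measure"
    and R \<gamma> B +
  fixes n :: nat and pol :: "('s, 'a) aug_state \<Rightarrow> 'a measure"
  assumes pol: "pol \<in> aug_space S n \<rightarrow>\<^sub>M prob_algebra borel"
begin

abbreviation "SA \<equiv> aug_space S n \<Otimes>\<^sub>M (borel :: 'a measure)"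
abbreviation "step \<equiv> sa_step S P n pol"

definition traj_from :: "('s, 'a) aug_state \<times> 'a \<Rightarrow> nat \<Rightarrow> (('s, 'a) aug_state \<times> 'a) measure" where
  "traj_from z i = traj S P n pol (return SA z) i"

lemma measurable_step: "step \<in> SA \<rightarrow>\<^sub>M prob_algebra SA"
  by (rule measurable_sa_step[OF pol])

lemma measurable_step_subprob: "step \<in> SA \<rightarrow>\<^sub>M subprob_algebra SA"
  by (rule measurable_prob_algebraD[OF measurable_step])

lemma traj_Suc_shift: "traj S P n pol mu0 (Suc i) = traj S P n pol (bind mu0 step) i"
  by (induction i) simp_all

lemma measurable_traj_from: "(\<lambda>z. traj_from z i) \<in> SA \<rightarrow>\<^sub>M prob_algebra SA"
proof (induction i)
  case 0 show ?case by (simp add: traj_from_def)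
next
  case (Suc i)
  have "(\<lambda>z. bind (traj_from z i) step) \<in> SA \<rightarrow>\<^sub>M prob_algebra SA"
    by (rule measurable_bind_prob_space[OF Suc measurable_step])
  then show ?case by (simp add: traj_from_def)
qed

lemma traj_eq_bind:
  assumes mu0: "mu0 \<in> space (prob_algebra SA)"
  shows "traj S P n pol mu0 i = bind mu0 (\<lambda>z. traj_from z i)"
proof (induction i)
  case 0
  have "sets mu0 = sets SA" using mu0 by (simp add: space_prob_algebra)
  then show ?case by (simp add: traj_from_def bind_return'')
next
  case (Suc i)
  have "traj S P n pol mu0 (Suc i) = bind (bind mu0 (\<lambda>z. traj_from z i)) step"
    using Suc by simp
  also have "\<dots> = bind mu0 (\<lambda>z. bind (traj_from z i) step)"
  proof (rule bind_assoc[OF _ measurable_step_subprob])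
    show "(\<lambda>z. traj_from z i) \<in> mu0 \<rightarrow>\<^sub>M subprob_algebra SA"
      using measurable_prob_algebraD[OF measurable_traj_from]
      by (simp add: measurable_cong_sets[OF prob_algebra_memberD(2)[OF mu0] refl])
  qed
  also have "\<dots> = bind mu0 (\<lambda>z. traj_from z (Suc i))" by (simp add: traj_from_def)
  finally show ?case .
qed

lemma traj_from_Suc:
  assumes z: "z \<in> space SA"
  shows "traj_from z (Suc i) = bind (step z) (\<lambda>z'. traj_from z' i)"
proof -
  have "traj_from z (Suc i) = traj S P n pol (bind (return SA z) step) i"
    unfolding traj_from_def by (rule traj_Suc_shift)
  also have "bind (return SA z) step = step z" by (rule bind_return[OF measurable_step_subprob z])
  also have "traj S P n pol (step z) i = bind (step z) (\<lambda>z'. traj_from z' i)"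
    by (rule traj_eq_bind) (rule measurable_space[OF measurable_step z])
  finally show ?thesis .
qed

definition reward :: "('s, 'a) aug_state \<times> 'a \<Rightarrow> real" where
  "reward z = cd_reward S P R n (fst z) (snd z)"

lemma measurable_reward: "reward \<in> borel_measurable SA"
  unfolding reward_def[abs_def] by (rule measurable_cd_reward)

lemma reward_abs_le: "z \<in> space SA \<Longrightarrow> \<bar>reward z\<bar> \<le> B"
  unfolding reward_def by (rule cd_reward_abs_le) (auto simp: space_pair_measure)

definition expected_reward :: "nat \<Rightarrow> ('s, 'a) aug_state \<times> 'a \<Rightarrow> real" where
  "expected_reward i z = (\<integral>z'. reward z' \<partial>traj_from z i)"

lemma traj_from_prob:
  assumes "z \<in> space SA"
  shows "prob_space (traj_from z i)" "sets (traj_from z i) = sets SA" "space (traj_from z i) = space SA"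
  using prob_algebra_memberD[OF measurable_space[OF measurable_traj_from assms]] by auto

lemma step_prob:
  assumes "z \<in> space SA"
  shows "prob_space (step z)" "sets (step z) = sets SA" "space (step z) = space SA"
  using prob_algebra_memberD[OF measurable_space[OF measurable_step assms]] by auto

lemma measurable_expected_reward: "expected_reward i \<in> borel_measurable SA"
  unfolding expected_reward_def[abs_def]
  by (rule measurable_compose[OF measurable_prob_algebraD[OF measurable_traj_from] integral_measurable_subprob_algebra[OF measurable_reward]])

lemma expected_reward_abs_le: "z \<in> space SA \<Longrightarrow> \<bar>expected_reward i z\<bar> \<le> B"
  unfolding expected_reward_def
  by (rule prob_space_integral_abs_le) (auto simp: traj_from_prob measurable_cong_sets[OF traj_from_prob(2) refl] measurable_reward reward_abs_le)

lemma expected_reward_0: "z \<in> space SA \<Longrightarrow> expected_reward 0 z = reward z"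
  unfolding expected_reward_def traj_from_def by (simp add: integral_return measurable_reward)

lemma expected_reward_Suc:
  assumes z: "z \<in> space SA"
  shows "expected_reward (Suc i) z = (\<integral>z'. expected_reward i z' \<partial>step z)"
proof -
  have "expected_reward (Suc i) z = (\<integral>z'. reward z' \<partial>bind (step z) (\<lambda>z'. traj_from z' i))"
    unfolding expected_reward_def traj_from_Suc[OF z] ..
  also have "\<dots> = (\<integral>z'. expected_reward i z' \<partial>step z)"
    unfolding expected_reward_def
  proof (rule integral_bind[where B=B and K=SA and B'=1])
    show "(\<lambda>z. traj_from z i) \<in> step z \<rightarrow>\<^sub>M subprob_algebra SA"
      using measurable_prob_algebraD[OF measurable_traj_from]
      by (simp add: measurable_cong_sets[OF step_prob(2)[OF z] refl])
    show "finite_measure (step z)" using step_prob[OF z] prob_space_def by blast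
    show "AE x in step z. emeasure (traj_from x i) (space (traj_from x i)) \<le> ennreal 1"
      by (rule AE_kernel_emeasure_le_1[where N=SA]) (simp add: step_prob[OF z] measurable_space[OF measurable_traj_from])
  qed (auto simp: measurable_reward reward_abs_le)
  finally show ?thesis .
qed

definition Q :: "('s, 'a) aug_state \<times> 'a \<Rightarrow> real" where
  "Q z = Q_fun S P R \<gamma> n pol (fst z) (snd z)"

lemma Q_eq_suminf: "Q z = (\<Sum>i. \<gamma> ^ i * expected_reward i z)"
  unfolding Q_def Q_fun_def expected_reward_def traj_from_def reward_def by simp

lemma measurable_Q: "Q \<in> borel_measurable SA"
  unfolding Q_eq_suminf[abs_def] using measurable_expected_reward by measurable

lemma Q_abs_le: "z \<in> space SA \<Longrightarrow> \<bar>Q z\<bar> \<le> B / (1 - \<gamma>)"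
  unfolding Q_eq_suminf by (rule abs_suminf_power_mult_le[OF discount_range]) (rule expected_reward_abs_le)

lemma Q_bellman:
  assumes z: "z \<in> space SA"
  shows "Q z = reward z + \<gamma> * (\<integral>z'. Q z' \<partial>step z)"
proof -
  have sm: "summable (\<lambda>i. \<gamma> ^ i * expected_reward i z)" by (rule summable_power_mult[OF discount_range]) (rule expected_reward_abs_le[OF z])
  have "Q z = (\<Sum>i. \<gamma> ^ Suc i * expected_reward (Suc i) z) + \<gamma> ^ 0 * expected_reward 0 z"
    unfolding Q_eq_suminf using suminf_split_head[OF sm] by simp
  also have "(\<Sum>i. \<gamma> ^ Suc i * expected_reward (Suc i) z) = \<gamma> * (\<Sum>i. \<gamma> ^ i * (\<integral>z'. expected_reward i z' \<partial>step z))"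
    unfolding expected_reward_Suc[OF z] 
    by (subst suminf_mult[symmetric]) (auto intro!: summable_power_mult[OF discount_range] prob_space_integral_abs_le measurable_expected_reward expected_reward_abs_le
        simp: step_prob[OF z] measurable_cong_sets[OF step_prob(2)[OF z] refl] mult.assoc)
  also have "(\<Sum>i. \<gamma> ^ i * (\<integral>z'. expected_reward i z' \<partial>step z)) = (\<integral>z'. Q z' \<partial>step z)"
    unfolding Q_eq_suminf
    by (rule integral_suminf_power_mult[OF discount_range, symmetric]) (auto intro!: measurable_expected_reward expected_reward_abs_le
        simp: step_prob[OF z] measurable_cong_sets[OF step_prob(2)[OF z] refl])
  finally show ?thesis using expected_reward_0[OF z] by simp
qed

abbreviation "act_law x' \<equiv> distr (pol x') SA (\<lambda>a'. (x', a'))"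

lemma measurable_act_law: "(\<lambda>x'. act_law x') \<in> aug_space S n \<rightarrow>\<^sub>M prob_algebra SA"
  by (rule measurable_distr_prob_space2[OF pol]) simp

lemma pol_prob:
  assumes "x' \<in> space (aug_space S n)"
  shows "prob_space (pol x')" "sets (pol x') = sets borel" "space (pol x') = UNIV"
  using prob_algebra_memberD[OF measurable_space[OF pol assms]] by auto

lemma act_law_prob:
  assumes "x' \<in> space (aug_space S n)"
  shows "prob_space (act_law x')" "sets (act_law x') = sets SA" "space (act_law x') = space SA"
  using prob_algebra_memberD[OF measurable_space[OF measurable_act_law assms]] by auto

lemma measurable_Pair_pol: "x' \<in> space (aug_space S n) \<Longrightarrow> (\<lambda>a'. (x', a')) \<in> pol x' \<rightarrow>\<^sub>M SA"
  by (simp add: measurable_cong_sets[OF pol_prob(2) refl])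

lemma integral_act_law:
  fixes G :: "_ \<Rightarrow> real"
  assumes x': "x' \<in> space (aug_space S n)" and G: "G \<in> borel_measurable SA"
  shows "(\<integral>z. G z \<partial>act_law x') = (\<integral>a'. G (x', a') \<partial>pol x')"
  by (rule integral_distr[OF measurable_Pair_pol[OF x'] G])

lemma nn_integral_act_law:
  fixes G :: "_ \<Rightarrow> ennreal"
  assumes x': "x' \<in> space (aug_space S n)" and G: "G \<in> borel_measurable SA"
  shows "(\<integral>\<^sup>+z. G z \<partial>act_law x') = (\<integral>\<^sup>+a'. G (x', a') \<partial>pol x')"
  by (rule nn_integral_distr[OF measurable_Pair_pol[OF x']]) (simp add: G)

lemma step_kernel_prob:
  assumes z: "z \<in> space SA"
  shows "prob_space (cd_kernel S P n (fst z) (snd z))" "sets (cd_kernel S P n (fst z) (snd z)) = sets (aug_space S n)"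
    "space (cd_kernel S P n (fst z) (snd z)) = space (aug_space S n)"
  using cd_kernel_prob[of "fst z" n "snd z"] z by (auto simp: space_pair_measure)

lemma integral_step:
  fixes G :: "_ \<Rightarrow> real"
  assumes z: "z \<in> space SA" and G: "G \<in> borel_measurable SA" and Gb: "\<And>z. z \<in> space SA \<Longrightarrow> \<bar>G z\<bar> \<le> C"
  shows "(\<integral>z'. G z' \<partial>step z) = (\<integral>x'. (\<integral>a'. G (x', a') \<partial>pol x') \<partial>cd_kernel S P n (fst z) (snd z))"
proof -
  have "(\<integral>z'. G z' \<partial>step z) = (\<integral>x'. (\<integral>z'. G z' \<partial>act_law x') \<partial>cd_kernel S P n (fst z) (snd z))"
    unfolding sa_step_def
  proof (rule integral_bind[where B=C and K=SA and B'=1])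
    show "(\<lambda>x'. act_law x') \<in> cd_kernel S P n (fst z) (snd z) \<rightarrow>\<^sub>M subprob_algebra SA"
      using measurable_prob_algebraD[OF measurable_act_law] by (simp add: measurable_cong_sets[OF step_kernel_prob(2)[OF z] refl])
    show "finite_measure (cd_kernel S P n (fst z) (snd z))" using step_kernel_prob[OF z] prob_space_def by blast
    show "AE x in cd_kernel S P n (fst z) (snd z). emeasure (act_law x) (space (act_law x)) \<le> ennreal 1"
      by (rule AE_kernel_emeasure_le_1[where N=SA]) (simp add: step_kernel_prob[OF z] measurable_space[OF measurable_act_law])
  qed (auto simp: G Gb)
  also have "\<dots> = (\<integral>x'. (\<integral>a'. G (x', a') \<partial>pol x') \<partial>cd_kernel S P n (fst z) (snd z))"
    by (rule Bochner_Integration.integral_cong[OF refl]) (simp add: step_kernel_prob[OF z] integral_act_law G)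
  finally show ?thesis .
qed

lemma nn_integral_step:
  fixes G :: "_ \<Rightarrow> ennreal"
  assumes z: "z \<in> space SA" and G: "G \<in> borel_measurable SA"
  shows "(\<integral>\<^sup>+z'. G z' \<partial>step z) = (\<integral>\<^sup>+x'. (\<integral>\<^sup>+a'. G (x', a') \<partial>pol x') \<partial>cd_kernel S P n (fst z) (snd z))"
proof -
  have "(\<integral>\<^sup>+z'. G z' \<partial>step z) = (\<integral>\<^sup>+x'. (\<integral>\<^sup>+z'. G z' \<partial>act_law x') \<partial>cd_kernel S P n (fst z) (snd z))"
    unfolding sa_step_def
    by (rule nn_integral_bind[OF G]) 
      (use measurable_prob_algebraD[OF measurable_act_law] in \<open>simp add: measurable_cong_sets[OF step_kernel_prob(2)[OF z] refl]\<close>)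
  also have "\<dots> = (\<integral>\<^sup>+x'. (\<integral>\<^sup>+a'. G (x', a') \<partial>pol x') \<partial>cd_kernel S P n (fst z) (snd z))"
    by (rule nn_integral_cong) (simp add: step_kernel_prob[OF z] nn_integral_act_law G)
  finally show ?thesis .
qed

lemma traj_in_prob_algebra: "mu0 \<in> space (prob_algebra SA) \<Longrightarrow> traj S P n pol mu0 i \<in> space (prob_algebra SA)"
proof (induction i)
  case (Suc i)
  then show ?case
    using prob_space_bind'[OF Suc.IH measurable_step] sets_bind'[OF Suc.IH measurable_step]
    by (simp add: space_prob_algebra)
qed simp

lemma measurable_traj_act_law: "(\<lambda>x'. traj S P n pol (act_law x') j) \<in> aug_space S n \<rightarrow>\<^sub>M prob_algebra SA"
proof -
  have m: "(\<lambda>x'. bind (act_law x') (\<lambda>z. traj_from z j)) \<in> aug_space S n \<rightarrow>\<^sub>M prob_algebra SA"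
    by (rule measurable_bind_prob_space[OF measurable_act_law measurable_traj_from])
  show ?thesis
    by (rule measurable_cong[THEN iffD1, OF _ m]) (simp add: traj_eq_bind[symmetric] measurable_space[OF measurable_act_law])
qed

lemma nn_integral_traj_Suc:
  fixes h :: "_ \<Rightarrow> ennreal"
  assumes x: "x \<in> space (aug_space S n)" and h: "h \<in> borel_measurable SA"
  shows "(\<integral>\<^sup>+ a. (\<integral>\<^sup>+ x'. (\<integral>\<^sup>+ z. h z \<partial>traj S P n pol (act_law x') j) \<partial>cd_kernel S P n x a) \<partial>pol x)
       = (\<integral>\<^sup>+ z. h z \<partial>traj S P n pol (act_law x) (Suc j))"
proof -
  define \<psi> where "\<psi> z = (\<integral>\<^sup>+ z'. h z' \<partial>traj_from z j)" for z
  have \<psi>m: "\<psi> \<in> borel_measurable SA"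
    unfolding \<psi>_def[abs_def]
    by (rule measurable_compose[OF measurable_prob_algebraD[OF measurable_traj_from] nn_integral_measurable_subprob_algebra[OF h]])
  have inner: "(\<integral>\<^sup>+ z. h z \<partial>traj S P n pol (act_law x') j) = (\<integral>\<^sup>+ a'. \<psi> (x', a') \<partial>pol x')"
    if x': "x' \<in> space (aug_space S n)" for x'
  proof -
    have "traj S P n pol (act_law x') j = bind (act_law x') (\<lambda>z. traj_from z j)"
      by (rule traj_eq_bind) (rule measurable_space[OF measurable_act_law x'])
    then have "(\<integral>\<^sup>+ z. h z \<partial>traj S P n pol (act_law x') j) = (\<integral>\<^sup>+ z. \<psi> z \<partial>act_law x')"
      unfolding \<psi>_def
      by (simp add: nn_integral_bind[OF h] measurable_cong_sets[OF act_law_prob(2)[OF x'] refl]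
          measurable_prob_algebraD[OF measurable_traj_from])
    also have "\<dots> = (\<integral>\<^sup>+ a'. \<psi> (x', a') \<partial>pol x')" by (rule nn_integral_act_law[OF x' \<psi>m])
    finally show ?thesis .
  qed
  have xa: "(x, a) \<in> space SA" for a using x by (simp add: space_pair_measure)
  have next_law: "bind (act_law x) step \<in> space (prob_algebra SA)"
    using traj_in_prob_algebra[OF measurable_space[OF measurable_act_law x], of 1] by simp
  have "(\<integral>\<^sup>+ a. (\<integral>\<^sup>+ x'. (\<integral>\<^sup>+ z. h z \<partial>traj S P n pol (act_law x') j) \<partial>cd_kernel S P n x a) \<partial>pol x)
      = (\<integral>\<^sup>+ a. (\<integral>\<^sup>+ x'. (\<integral>\<^sup>+ a'. \<psi> (x', a') \<partial>pol x') \<partial>cd_kernel S P n x a) \<partial>pol x)"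
    by (intro nn_integral_cong) (simp add: inner cd_kernel_prob[OF x])
  also have "\<dots> = (\<integral>\<^sup>+ a. (\<integral>\<^sup>+ z'. \<psi> z' \<partial>step (x, a)) \<partial>pol x)"
    by (intro nn_integral_cong) (simp add: nn_integral_step[OF xa \<psi>m])
  also have "\<dots> = (\<integral>\<^sup>+ z0. (\<integral>\<^sup>+ z'. \<psi> z' \<partial>step z0) \<partial>act_law x)"
    by (rule nn_integral_act_law[OF x, symmetric])
      (rule measurable_compose[OF measurable_step_subprob nn_integral_measurable_subprob_algebra[OF \<psi>m]])
  also have "\<dots> = (\<integral>\<^sup>+ z'. \<psi> z' \<partial>bind (act_law x) step)"
    by (rule nn_integral_bind[OF \<psi>m, symmetric])
      (simp add: measurable_cong_sets[OF act_law_prob(2)[OF x] refl] measurable_step_subprob)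
  also have "\<dots> = (\<integral>\<^sup>+ z. h z \<partial>bind (bind (act_law x) step) (\<lambda>z. traj_from z j))"
    unfolding \<psi>_def
    by (rule nn_integral_bind[OF h, symmetric])
      (simp add: measurable_cong_sets[OF prob_algebra_memberD(2)[OF next_law] refl]
        measurable_prob_algebraD[OF measurable_traj_from])
  also have "bind (bind (act_law x) step) (\<lambda>z. traj_from z j) = traj S P n pol (act_law x) (Suc j)"
    using traj_eq_bind[OF next_law, of j] unfolding traj_Suc_shift by (rule sym)
  finally show ?thesis .
qed

lemma nn_integral_visitation:
  fixes f :: "_ \<Rightarrow> ennreal"
  assumes x': "x' \<in> space (aug_space S n)" and f: "f \<in> borel_measurable (aug_space S n)"
  shows "(\<integral>\<^sup>+ xh. f xh \<partial>visitation S P \<gamma> n pol x')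
       = (\<Sum>j. ennreal ((1 - \<gamma>) * \<gamma> ^ j) * (\<integral>\<^sup>+ z. f (fst z) \<partial>traj S P n pol (act_law x') j))"
proof -
  have sl: "state_law S P n pol x' j \<in> space (prob_algebra (aug_space S n))" for j
    unfolding state_law_def
    by (rule measurable_space[OF measurable_distr_prob_space[OF measurable_fst]])
      (rule traj_in_prob_algebra[OF measurable_space[OF measurable_act_law x']])
  have "(\<integral>\<^sup>+ xh. f xh \<partial>visitation S P \<gamma> n pol x')
      = (\<integral>\<^sup>+ j. (\<integral>\<^sup>+ xh. f xh \<partial>state_law S P n pol x' j) \<partial>measure_pmf (geometric_pmf (1 - \<gamma>)))"
    unfolding visitation_def
  proof (rule nn_integral_bind[OF f])
    show "state_law S P n pol x' \<in> measure_pmf (geometric_pmf (1 - \<gamma>)) \<rightarrow>\<^sub>M subprob_algebra (aug_space S n)"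
      using sl by (auto simp: space_prob_algebra space_subprob_algebra prob_space_imp_subprob_space)
  qed
  also have "\<dots> = (\<Sum>j. ennreal (pmf (geometric_pmf (1 - \<gamma>)) j) * (\<integral>\<^sup>+ xh. f xh \<partial>state_law S P n pol x' j))"
    by (simp add: nn_integral_measure_pmf nn_integral_count_space_nat)
  also have "\<dots> = (\<Sum>j. ennreal ((1 - \<gamma>) * \<gamma> ^ j) * (\<integral>\<^sup>+ z. f (fst z) \<partial>traj S P n pol (act_law x') j))"
  proof (rule suminf_cong)
    fix j
    have "pmf (geometric_pmf (1 - \<gamma>)) j = (1 - \<gamma>) * \<gamma> ^ j" using discount by simp
    moreover have "(\<integral>\<^sup>+ xh. f xh \<partial>state_law S P n pol x' j) = (\<integral>\<^sup>+ z. f (fst z) \<partial>traj S P n pol (act_law x') j)"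
      unfolding state_law_def
      by (rule nn_integral_distr) (simp_all add: f measurable_cong_sets[OF prob_algebra_memberD(2)[OF traj_in_prob_algebra[OF measurable_space[OF measurable_act_law x']]] refl])
    ultimately show "ennreal (pmf (geometric_pmf (1 - \<gamma>)) j) * (\<integral>\<^sup>+ xh. f xh \<partial>state_law S P n pol x' j)
        = ennreal ((1 - \<gamma>) * \<gamma> ^ j) * (\<integral>\<^sup>+ z. f (fst z) \<partial>traj S P n pol (act_law x') j)" by simp
  qed
  finally show ?thesis .
qed


lemma nn_integral_discounted_traj:
  fixes f :: "_ \<Rightarrow> ennreal"
  assumes x: "x \<in> space (aug_space S n)" and f: "f \<in> borel_measurable (aug_space S n)"
  shows "(\<Sum>j. ennreal ((1 - \<gamma>) * \<gamma> ^ j) * (\<integral>\<^sup>+ z. f (fst z) \<partial>traj S P n pol (act_law x) (Suc j)))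
       = (\<integral>\<^sup>+ a. (\<integral>\<^sup>+ x'. (\<integral>\<^sup>+ xh. f xh \<partial>visitation S P \<gamma> n pol x') \<partial>cd_kernel S P n x a) \<partial>pol x)"
proof -
  define c where "c j = ennreal ((1 - \<gamma>) * \<gamma> ^ j)" for j :: nat
  define \<Phi> where "\<Phi> j x' = (\<integral>\<^sup>+ z. f (fst z) \<partial>traj S P n pol (act_law x') j)" for j x'
  have f_fst: "(\<lambda>z. f (fst z)) \<in> borel_measurable SA" using f by measurable
  have \<Phi>_meas: "\<Phi> j \<in> borel_measurable (aug_space S n)" for j
    unfolding \<Phi>_def[abs_def]
    by (rule measurable_compose[OF measurable_prob_algebraD[OF measurable_traj_act_law]
          nn_integral_measurable_subprob_algebra[OF f_fst]])
  have kernel_meas: "(\<lambda>a. \<integral>\<^sup>+ x'. \<Phi> j x' \<partial>cd_kernel S P n x a) \<in> borel_measurable (pol x)" for j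
    by (subst measurable_cong_sets[OF pol_prob(2)[OF x] refl])
      (rule measurable_compose[OF measurable_prob_algebraD[OF measurable_cd_kernel_action[OF x]]
          nn_integral_measurable_subprob_algebra[OF \<Phi>_meas]])
  have inner: "(\<Sum>j. c j * (\<integral>\<^sup>+ x'. \<Phi> j x' \<partial>cd_kernel S P n x a))
      = (\<integral>\<^sup>+ x'. (\<Sum>j. c j * \<Phi> j x') \<partial>cd_kernel S P n x a)" for a
  proof -
    have "(\<integral>\<^sup>+ x'. (\<Sum>j. c j * \<Phi> j x') \<partial>cd_kernel S P n x a)
        = (\<Sum>j. (\<integral>\<^sup>+ x'. c j * \<Phi> j x' \<partial>cd_kernel S P n x a))"
      by (rule nn_integral_suminf) (use \<Phi>_meas in \<open>simp add: measurable_cong_sets[OF cd_kernel_prob(2)[OF x] refl]\<close>)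
    also have "\<dots> = (\<Sum>j. c j * (\<integral>\<^sup>+ x'. \<Phi> j x' \<partial>cd_kernel S P n x a))"
      by (intro suminf_cong nn_integral_cmult) (simp add: measurable_cong_sets[OF cd_kernel_prob(2)[OF x] refl] \<Phi>_meas)
    finally show ?thesis by simp
  qed
  have "(\<Sum>j. c j * (\<integral>\<^sup>+ z. f (fst z) \<partial>traj S P n pol (act_law x) (Suc j)))
      = (\<Sum>j. c j * (\<integral>\<^sup>+ a. (\<integral>\<^sup>+ x'. \<Phi> j x' \<partial>cd_kernel S P n x a) \<partial>pol x))"
    unfolding \<Phi>_def by (simp add: nn_integral_traj_Suc[OF x f_fst])
  also have "\<dots> = (\<Sum>j. (\<integral>\<^sup>+ a. c j * (\<integral>\<^sup>+ x'. \<Phi> j x' \<partial>cd_kernel S P n x a) \<partial>pol x))"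
    by (intro suminf_cong nn_integral_cmult[symmetric] kernel_meas)
  also have "\<dots> = (\<integral>\<^sup>+ a. (\<Sum>j. c j * (\<integral>\<^sup>+ x'. \<Phi> j x' \<partial>cd_kernel S P n x a)) \<partial>pol x)"
    by (rule nn_integral_suminf[symmetric]) (use kernel_meas in measurable)
  also have "\<dots> = (\<integral>\<^sup>+ a. (\<integral>\<^sup>+ x'. (\<Sum>j. c j * \<Phi> j x') \<partial>cd_kernel S P n x a) \<partial>pol x)"
    by (simp only: inner)
  also have "\<dots> = (\<integral>\<^sup>+ a. (\<integral>\<^sup>+ x'. (\<integral>\<^sup>+ xh. f xh \<partial>visitation S P \<gamma> n pol x') \<partial>cd_kernel S P n x a) \<partial>pol x)"
  proof (intro nn_integral_cong)
    fix a x' assume "x' \<in> space (cd_kernel S P n x a)"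
    then have x': "x' \<in> space (aug_space S n)" using cd_kernel_prob(3)[OF x] by simp
    show "(\<Sum>j. c j * \<Phi> j x') = (\<integral>\<^sup>+ xh. f xh \<partial>visitation S P \<gamma> n pol x')"
      unfolding nn_integral_visitation[OF x' f] c_def \<Phi>_def ..
  qed
  finally show ?thesis by (simp add: c_def)
qed
end

section \<open>Comparing the two delays\<close>

locale delay_comparison = delayed_mdp S P R \<gamma> B for S :: "'s measure" and P :: "'s \<Rightarrow> 'a::metric_space \<Rightarrow> 's measure"
    and R \<gamma> B +
  fixes n m :: nat and pol polt :: "('s, 'a) aug_state \<Rightarrow> 'a measure"
  assumes delay: "m \<le> n"
    and pol: "pol \<in> aug_space S n \<rightarrow>\<^sub>M prob_algebra borel"
    and polt: "polt \<in> aug_space S m \<rightarrow>\<^sub>M prob_algebra borel"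
begin

sublocale A: delayed_mdp_policy S P R \<gamma> B n pol by unfold_locales (rule pol)
sublocale T: delayed_mdp_policy S P R \<gamma> B m polt by unfold_locales (rule polt)

abbreviation "db x \<equiv> delayed_belief S P n m x"
abbreviation "Qmax \<equiv> B / (1 - \<gamma>)"

lemma db_prob:
  assumes "x \<in> space (aug_space S n)"
  shows "prob_space (db x)" "sets (db x) = sets (aug_space S m)" "space (db x) = space (aug_space S m)"
  using delayed_belief_prob[OF assms delay] by auto

definition Qtau_bel :: "('s, 'a) aug_state \<times> 'a \<Rightarrow> real" where
  "Qtau_bel z = (\<integral>xt. T.Q (xt, snd z) \<partial>db (fst z))"
definition Vtau :: "('s, 'a) aug_state \<Rightarrow> real" where
  "Vtau xt = (\<integral>a. T.Q (xt, a) \<partial>polt xt)"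
definition Vtau_bel :: "('s, 'a) aug_state \<Rightarrow> real" where
  "Vtau_bel x = (\<integral>xt. Vtau xt \<partial>db x)"
definition Qtau_pol :: "('s, 'a) aug_state \<times> ('s, 'a) aug_state \<Rightarrow> real" where
  "Qtau_pol p = (\<integral>a. T.Q (snd p, a) \<partial>pol (fst p))"
definition pol_gap :: "('s, 'a) aug_state \<Rightarrow> real" where
  "pol_gap x = (\<integral>xt. Vtau xt - Qtau_pol (x, xt) \<partial>db x)"
definition Q_gap :: "('s, 'a) aug_state \<times> 'a \<Rightarrow> real" where
  "Q_gap z = Qtau_bel z - A.Q z"

lemma Qtau_abs_le: "xt \<in> space (aug_space S m) \<Longrightarrow> \<bar>T.Q (xt, a)\<bar> \<le> Qmax"
  by (rule T.Q_abs_le) (simp add: space_pair_measure)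

lemma Q_abs_le_aug: "x \<in> space (aug_space S n) \<Longrightarrow> \<bar>A.Q (x, a)\<bar> \<le> Qmax"
  by (rule A.Q_abs_le) (simp add: space_pair_measure)

lemma measurable_Qtau_action: "xt \<in> space (aug_space S m) \<Longrightarrow> (\<lambda>a. T.Q (xt, a)) \<in> borel_measurable borel"
  using measurable_compose[OF _ T.measurable_Q, of "\<lambda>a. (xt, a)" borel] by simp

lemma measurable_Q_action: "x \<in> space (aug_space S n) \<Longrightarrow> (\<lambda>a. A.Q (x, a)) \<in> borel_measurable borel"
  using measurable_compose[OF _ A.measurable_Q, of "\<lambda>a. (x, a)" borel] by simp

lemma measurable_Qtau_state: "a \<in> space borel \<Longrightarrow> (\<lambda>xt. T.Q (xt, a)) \<in> borel_measurable (aug_space S m)"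
  using measurable_compose[OF _ T.measurable_Q, of "\<lambda>xt. (xt, a)" "aug_space S m"] by simp

lemma measurable_Vtau: "Vtau \<in> borel_measurable (aug_space S m)"
  unfolding Vtau_def[abs_def] by (rule measurable_integral_kernel[OF T.measurable_Q polt])

lemma Vtau_abs_le: "xt \<in> space (aug_space S m) \<Longrightarrow> \<bar>Vtau xt\<bar> \<le> Qmax"
  unfolding Vtau_def
  by (rule prob_space_integral_abs_le) (auto simp: T.pol_prob measurable_Qtau_action Qtau_abs_le measurable_cong_sets[OF T.pol_prob(2) refl])

lemma measurable_Qtau_pol: "Qtau_pol \<in> borel_measurable (aug_space S n \<Otimes>\<^sub>M aug_space S m)"
proof -
  have K: "(\<lambda>p. pol (fst p)) \<in> aug_space S n \<Otimes>\<^sub>M aug_space S m \<rightarrow>\<^sub>M prob_algebra borel"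
    by (rule measurable_compose[OF measurable_fst pol])
  have f: "(\<lambda>q. T.Q (snd (fst q), snd q)) \<in> borel_measurable ((aug_space S n \<Otimes>\<^sub>M aug_space S m) \<Otimes>\<^sub>M borel)"
    by (rule measurable_compose[OF _ T.measurable_Q]) simp
  show ?thesis unfolding Qtau_pol_def[abs_def] using measurable_integral_kernel[OF f K] by simp
qed

lemma Qtau_pol_abs_le: "x \<in> space (aug_space S n) \<Longrightarrow> xt \<in> space (aug_space S m) \<Longrightarrow> \<bar>Qtau_pol (x, xt)\<bar> \<le> Qmax"
  unfolding Qtau_pol_def
  by (rule prob_space_integral_abs_le) (auto simp: A.pol_prob measurable_Qtau_action Qtau_abs_le measurable_cong_sets[OF A.pol_prob(2) refl])

lemma measurable_db: "(\<lambda>x. db x) \<in> aug_space S n \<rightarrow>\<^sub>M prob_algebra (aug_space S m)"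
  by (rule measurable_delayed_belief[OF delay])

lemma measurable_pol_gap: "pol_gap \<in> borel_measurable (aug_space S n)"
proof -
  have f: "(\<lambda>p. Vtau (snd p) - Qtau_pol p) \<in> borel_measurable (aug_space S n \<Otimes>\<^sub>M aug_space S m)"
    using measurable_Vtau measurable_Qtau_pol by measurable
  show ?thesis unfolding pol_gap_def[abs_def] using measurable_integral_kernel[OF f measurable_db] by simp
qed

lemma pol_gap_abs_le: "x \<in> space (aug_space S n) \<Longrightarrow> \<bar>pol_gap x\<bar> \<le> 2 * Qmax"
  unfolding pol_gap_def
proof (rule prob_space_integral_abs_le)
  assume x: "x \<in> space (aug_space S n)"
  show "prob_space (db x)" by (rule db_prob(1)[OF x])
  have "(\<lambda>xt. Qtau_pol (x, xt)) \<in> borel_measurable (aug_space S m)"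
    using measurable_compose[OF _ measurable_Qtau_pol, of "\<lambda>xt. (x, xt)"] x by simp
  then show "(\<lambda>xt. Vtau xt - Qtau_pol (x, xt)) \<in> borel_measurable (db x)"
    using measurable_Vtau by (simp add: measurable_cong_sets[OF db_prob(2)[OF x] refl])
  fix xt assume "xt \<in> space (db x)"
  then have xt: "xt \<in> space (aug_space S m)" using db_prob(3)[OF x] by simp
  show "\<bar>Vtau xt - Qtau_pol (x, xt)\<bar> \<le> 2 * Qmax" using Vtau_abs_le[OF xt] Qtau_pol_abs_le[OF x xt] by linarith
qed

lemma measurable_Qtau_bel: "Qtau_bel \<in> borel_measurable A.SA"
proof -
  have K: "(\<lambda>z. db (fst z)) \<in> A.SA \<rightarrow>\<^sub>M prob_algebra (aug_space S m)"
    by (rule measurable_compose[OF measurable_fst measurable_db])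
  have f: "(\<lambda>q. T.Q (snd q, snd (fst q))) \<in> borel_measurable (A.SA \<Otimes>\<^sub>M aug_space S m)"
    by (rule measurable_compose[OF _ T.measurable_Q]) simp
  show ?thesis unfolding Qtau_bel_def[abs_def] using measurable_integral_kernel[OF f K] by simp
qed

lemma Qtau_bel_abs_le: "z \<in> space A.SA \<Longrightarrow> \<bar>Qtau_bel z\<bar> \<le> Qmax"
  unfolding Qtau_bel_def
proof (rule prob_space_integral_abs_le)
  assume z: "z \<in> space A.SA"
  then have x: "fst z \<in> space (aug_space S n)" by (auto simp: space_pair_measure)
  show "prob_space (db (fst z))" by (rule db_prob(1)[OF x])
  show "(\<lambda>xt. T.Q (xt, snd z)) \<in> borel_measurable (db (fst z))"
    using measurable_Qtau_state by (simp add: measurable_cong_sets[OF db_prob(2)[OF x] refl])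
  fix xt assume "xt \<in> space (db (fst z))"
  then show "\<bar>T.Q (xt, snd z)\<bar> \<le> Qmax" using db_prob(3)[OF x] Qtau_abs_le by simp
qed

lemma measurable_Vtau_bel: "Vtau_bel \<in> borel_measurable (aug_space S n)"
proof -
  have f: "(\<lambda>p. Vtau (snd p)) \<in> borel_measurable (aug_space S n \<Otimes>\<^sub>M aug_space S m)"
    using measurable_Vtau by measurable
  show ?thesis unfolding Vtau_bel_def[abs_def] using measurable_integral_kernel[OF f measurable_db] by simp
qed

lemma Vtau_bel_abs_le: "x \<in> space (aug_space S n) \<Longrightarrow> \<bar>Vtau_bel x\<bar> \<le> Qmax"
  unfolding Vtau_bel_def
  by (rule prob_space_integral_abs_le) (auto simp: db_prob Vtau_abs_le measurable_Vtau measurable_cong_sets[OF db_prob(2) refl])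

lemma measurable_Q_gap: "Q_gap \<in> borel_measurable A.SA"
  unfolding Q_gap_def[abs_def] using measurable_Qtau_bel A.measurable_Q by measurable

lemma Q_gap_abs_le: "z \<in> space A.SA \<Longrightarrow> \<bar>Q_gap z\<bar> \<le> 2 * Qmax"
  unfolding Q_gap_def using Qtau_bel_abs_le[of z] A.Q_abs_le[of z] by linarith

lemma Qtau_bellman:
  assumes xt: "xt \<in> space (aug_space S m)"
  shows "T.Q (xt, a) = cd_reward S P R m xt a + \<gamma> * (\<integral>y. Vtau y \<partial>cd_kernel S P m xt a)"
proof -
  have xta: "(xt, a) \<in> space T.SA" using xt by (simp add: space_pair_measure)
  have "T.Q (xt, a) = T.reward (xt, a) + \<gamma> * (\<integral>z'. T.Q z' \<partial>T.step (xt, a))"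
    by (rule T.Q_bellman[OF xta])
  also have "(\<integral>z'. T.Q z' \<partial>T.step (xt, a)) = (\<integral>y. (\<integral>a'. T.Q (y, a') \<partial>polt y) \<partial>cd_kernel S P m xt a)"
    using T.integral_step[OF xta T.measurable_Q T.Q_abs_le] by simp
  finally show ?thesis by (simp add: T.reward_def Vtau_def)
qed

lemma integral_db_cd_kernel_Vtau:
  assumes x: "x \<in> space (aug_space S n)"
  shows "(\<integral>xt. (\<integral>y. Vtau y \<partial>cd_kernel S P m xt a) \<partial>db x) = (\<integral>y. Vtau_bel y \<partial>cd_kernel S P n x a)"
proof -
  have ckm: "(\<lambda>xt. cd_kernel S P m xt a) \<in> aug_space S m \<rightarrow>\<^sub>M prob_algebra (aug_space S m)"
    by (rule measurable_cd_kernel_state)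
  have "(\<integral>xt. (\<integral>y. Vtau y \<partial>cd_kernel S P m xt a) \<partial>db x)
      = (\<integral>y. Vtau y \<partial>bind (db x) (\<lambda>xt. cd_kernel S P m xt a))"
  proof (rule integral_bind[where K="aug_space S m" and B=Qmax and B'=1, symmetric])
    show "(\<lambda>xt. cd_kernel S P m xt a) \<in> db x \<rightarrow>\<^sub>M subprob_algebra (aug_space S m)"
      by (simp add: measurable_cong_sets[OF db_prob(2)[OF x] refl] measurable_prob_algebraD[OF ckm])
    show "finite_measure (db x)" using db_prob(1)[OF x] prob_space_def by blast
    show "AE xt in db x. emeasure (cd_kernel S P m xt a) (space (cd_kernel S P m xt a)) \<le> ennreal 1"
      by (rule AE_kernel_emeasure_le_1[where N="aug_space S m"]) (simp add: db_prob(3)[OF x] measurable_space[OF ckm])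
  qed (auto simp: measurable_Vtau Vtau_abs_le)
  also have "bind (db x) (\<lambda>xt. cd_kernel S P m xt a) = bind (cd_kernel S P n x a) db"
    by (rule delayed_belief_cd_kernel_commute[OF x delay])
  also have "(\<integral>y. Vtau y \<partial>bind (cd_kernel S P n x a) db) = (\<integral>y. (\<integral>xt. Vtau xt \<partial>db y) \<partial>cd_kernel S P n x a)"
  proof (rule integral_bind[where K="aug_space S m" and B=Qmax and B'=1])
    show "(\<lambda>y. db y) \<in> cd_kernel S P n x a \<rightarrow>\<^sub>M subprob_algebra (aug_space S m)"
      by (simp add: measurable_cong_sets[OF cd_kernel_prob(2)[OF x] refl] measurable_prob_algebraD[OF measurable_db])
    show "finite_measure (cd_kernel S P n x a)" using cd_kernel_prob(1)[OF x] prob_space_def by blast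
    show "AE y in cd_kernel S P n x a. emeasure (db y) (space (db y)) \<le> ennreal 1"
      by (rule AE_kernel_emeasure_le_1[where N="aug_space S m"]) (simp add: cd_kernel_prob(3)[OF x] measurable_space[OF measurable_db])
  qed (auto simp: measurable_Vtau Vtau_abs_le)
  finally show ?thesis by (simp add: Vtau_bel_def)
qed

lemma Qtau_bel_bellman:
  assumes z: "z \<in> space A.SA"
  shows "Qtau_bel z = A.reward z + \<gamma> * (\<integral>y. Vtau_bel y \<partial>cd_kernel S P n (fst z) (snd z))"
proof -
  obtain x a where zx: "z = (x, a)" by (cases z)
  have x: "x \<in> space (aug_space S n)" using z zx by (simp add: space_pair_measure)
  have reward_int: "integrable (db x) (\<lambda>xt. cd_reward S P R m xt a)"
    by (rule prob_algebra_integrable_bounded(1)[OF measurable_space[OF measurable_db x]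
          measurable_cd_reward_state cd_reward_abs_le])
  have next_meas: "(\<lambda>xt. \<integral>y. Vtau y \<partial>cd_kernel S P m xt a) \<in> borel_measurable (aug_space S m)"
  proof -
    have "(\<lambda>p. Vtau (snd p)) \<in> borel_measurable (aug_space S m \<Otimes>\<^sub>M aug_space S m)"
      using measurable_Vtau by measurable
    from measurable_integral_kernel[OF this measurable_cd_kernel_state] show ?thesis by simp
  qed
  have next_int: "integrable (db x) (\<lambda>xt. \<integral>y. Vtau y \<partial>cd_kernel S P m xt a)"
    by (rule prob_algebra_integrable_bounded(1)[OF measurable_space[OF measurable_db x] next_meas])
      (rule prob_algebra_integrable_bounded(2)[OF measurable_space[OF measurable_cd_kernel_state] measurable_Vtau Vtau_abs_le])
  have "Qtau_bel z = (\<integral>xt. cd_reward S P R m xt a + \<gamma> * (\<integral>y. Vtau y \<partial>cd_kernel S P m xt a) \<partial>db x)"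
    unfolding Qtau_bel_def zx fst_conv snd_conv
    by (rule Bochner_Integration.integral_cong[OF refl]) (simp add: Qtau_bellman db_prob(3)[OF x])
  also have "\<dots> = (\<integral>xt. cd_reward S P R m xt a \<partial>db x) + \<gamma> * (\<integral>xt. (\<integral>y. Vtau y \<partial>cd_kernel S P m xt a) \<partial>db x)"
    using reward_int next_int by simp
  also have "(\<integral>xt. cd_reward S P R m xt a \<partial>db x) = A.reward z"
    using delayed_belief_cd_reward[OF x delay] by (simp add: A.reward_def zx)
  finally show ?thesis by (simp add: integral_db_cd_kernel_Vtau[OF x] zx)
qed

lemma measurable_integral_pol_Q: "(\<lambda>x''. \<integral>a'. A.Q (x'', a') \<partial>pol x'') \<in> borel_measurable (aug_space S n)"
  using measurable_integral_kernel[OF A.measurable_Q pol] by simp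

lemma integral_pol_Q_abs_le: "x'' \<in> space (aug_space S n) \<Longrightarrow> \<bar>\<integral>a'. A.Q (x'', a') \<partial>pol x''\<bar> \<le> Qmax"
  by (rule prob_space_integral_abs_le) (auto simp: A.pol_prob measurable_Q_action Q_abs_le_aug measurable_cong_sets[OF A.pol_prob(2) refl])

lemma integral_pol_Qtau_bel:
  assumes x: "x \<in> space (aug_space S n)"
  shows "(\<integral>a. Qtau_bel (x, a) \<partial>pol x) = (\<integral>xt. Qtau_pol (x, xt) \<partial>db x)"
proof -
  note pf = A.pol_prob[OF x]
  have "(\<integral>a. Qtau_bel (x, a) \<partial>pol x) = (\<integral>a. (\<integral>xt. T.Q (xt, a) \<partial>db x) \<partial>pol x)"
    by (simp add: Qtau_bel_def)
  also have "\<dots> = (\<integral>xt. (\<integral>a. T.Q (xt, a) \<partial>pol x) \<partial>db x)"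
  proof (rule integral_swap_bounded[OF db_prob(1)[OF x] pf(1), symmetric, where C=Qmax])
    show "(\<lambda>p. T.Q (fst p, snd p)) \<in> borel_measurable (db x \<Otimes>\<^sub>M pol x)"
      using T.measurable_Q by (simp add: measurable_cong_sets[OF sets_pair_measure_cong[OF db_prob(2)[OF x] pf(2)] refl])
    show "\<And>xt a. xt \<in> space (db x) \<Longrightarrow> a \<in> space (pol x) \<Longrightarrow> \<bar>T.Q (xt, a)\<bar> \<le> Qmax"
      using Qtau_abs_le db_prob(3)[OF x] by simp
  qed
  finally show ?thesis by (simp add: Qtau_pol_def)
qed

lemma integral_pol_gap_Q_gap:
  assumes x: "x \<in> space (aug_space S n)"
  shows "(\<integral>a. pol_gap x + Q_gap (x, a) \<partial>pol x) = Vtau_bel x - (\<integral>a. A.Q (x, a) \<partial>pol x)"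
proof -
  interpret pol_x: prob_space "pol x" by (rule A.pol_prob(1)[OF x])
  have xa: "(x, a) \<in> space A.SA" for a using x by (simp add: space_pair_measure)
  have "(\<lambda>a. Qtau_bel (x, a)) \<in> borel_measurable borel"
    using measurable_compose[OF _ measurable_Qtau_bel, of "\<lambda>a. (x, a)" borel] x by simp
  then have Qtau_bel_int: "integrable (pol x) (\<lambda>a. Qtau_bel (x, a))"
    by (rule prob_algebra_integrable_bounded(1)[OF measurable_space[OF pol x]]) (rule Qtau_bel_abs_le[OF xa])
  have Q_int: "integrable (pol x) (\<lambda>a. A.Q (x, a))"
    by (rule prob_algebra_integrable_bounded(1)[OF measurable_space[OF pol x] measurable_Q_action[OF x]])
      (rule Q_abs_le_aug[OF x])
  have "(\<lambda>xt. Qtau_pol (x, xt)) \<in> borel_measurable (aug_space S m)"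
    using measurable_compose[OF _ measurable_Qtau_pol, of "\<lambda>xt. (x, xt)"] x by simp
  then have Qtau_pol_int: "integrable (db x) (\<lambda>xt. Qtau_pol (x, xt))"
    by (rule prob_algebra_integrable_bounded(1)[OF measurable_space[OF measurable_db x]]) (rule Qtau_pol_abs_le[OF x])
  have Vtau_int: "integrable (db x) Vtau"
    by (rule prob_algebra_integrable_bounded(1)[OF measurable_space[OF measurable_db x] measurable_Vtau Vtau_abs_le])
  have "(\<integral>a. pol_gap x + Q_gap (x, a) \<partial>pol x)
      = pol_gap x + ((\<integral>a. Qtau_bel (x, a) \<partial>pol x) - (\<integral>a. A.Q (x, a) \<partial>pol x))"
    using Qtau_bel_int Q_int pol_x.prob_space by (simp add: Q_gap_def)
  moreover have "pol_gap x = Vtau_bel x - (\<integral>xt. Qtau_pol (x, xt) \<partial>db x)"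
    unfolding pol_gap_def Vtau_bel_def using Vtau_int Qtau_pol_int by simp
  ultimately show ?thesis by (simp add: integral_pol_Qtau_bel[OF x])
qed

lemma Q_gap_recursion:
  assumes z: "z \<in> space A.SA"
  shows "Q_gap z = \<gamma> * (\<integral>z'. pol_gap (fst z') + Q_gap z' \<partial>A.step z)"
proof -
  obtain x a where zx: "z = (x, a)" by (cases z)
  have x: "x \<in> space (aug_space S n)" using z zx by (simp add: space_pair_measure)
  note kf = cd_kernel_prob[OF x, of a]
  have gaps_meas: "(\<lambda>z'. pol_gap (fst z') + Q_gap z') \<in> borel_measurable A.SA"
    using measurable_pol_gap measurable_Q_gap by measurable
  have gaps_bound: "\<bar>pol_gap (fst z') + Q_gap z'\<bar> \<le> 4 * Qmax" if "z' \<in> space A.SA" for z'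
  proof -
    have "fst z' \<in> space (aug_space S n)" using that by (auto simp: space_pair_measure)
    then show ?thesis using pol_gap_abs_le[of "fst z'"] Q_gap_abs_le[OF that] by linarith
  qed
  have e1: "(\<integral>z'. A.Q z' \<partial>A.step z) = (\<integral>x''. (\<integral>a'. A.Q (x'', a') \<partial>pol x'') \<partial>cd_kernel S P n x a)"
    using A.integral_step[OF z A.measurable_Q A.Q_abs_le] zx by simp
  have e2: "(\<integral>z'. pol_gap (fst z') + Q_gap z' \<partial>A.step z) = (\<integral>x''. (\<integral>a'. pol_gap x'' + Q_gap (x'', a') \<partial>pol x'') \<partial>cd_kernel S P n x a)"
    using A.integral_step[OF z gaps_meas gaps_bound] zx by simp
  have Vtau_bel_int: "integrable (cd_kernel S P n x a) Vtau_bel"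
    by (rule prob_algebra_integrable_bounded(1)[OF measurable_space[OF measurable_cd_kernel_state x]
          measurable_Vtau_bel Vtau_bel_abs_le])
  have V_int: "integrable (cd_kernel S P n x a) (\<lambda>x''. \<integral>a'. A.Q (x'', a') \<partial>pol x'')"
    by (rule prob_algebra_integrable_bounded(1)[OF measurable_space[OF measurable_cd_kernel_state x]
          measurable_integral_pol_Q integral_pol_Q_abs_le])
  have "Q_gap z = \<gamma> * ((\<integral>x''. Vtau_bel x'' \<partial>cd_kernel S P n x a) - (\<integral>x''. (\<integral>a'. A.Q (x'', a') \<partial>pol x'') \<partial>cd_kernel S P n x a))"
    unfolding Q_gap_def using Qtau_bel_bellman[OF z] A.Q_bellman[OF z] e1 zx by (simp add: algebra_simps)
  also have "(\<integral>x''. Vtau_bel x'' \<partial>cd_kernel S P n x a) - (\<integral>x''. (\<integral>a'. A.Q (x'', a') \<partial>pol x'') \<partial>cd_kernel S P n x a)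
      = (\<integral>x''. Vtau_bel x'' - (\<integral>a'. A.Q (x'', a') \<partial>pol x'') \<partial>cd_kernel S P n x a)"
    using Vtau_bel_int V_int by simp
  also have "\<dots> = (\<integral>x''. (\<integral>a'. pol_gap x'' + Q_gap (x'', a') \<partial>pol x'') \<partial>cd_kernel S P n x a)"
    by (rule Bochner_Integration.integral_cong[OF refl]) (simp add: kf(3) integral_pol_gap_Q_gap)
  finally show ?thesis using e2 by simp
qed

abbreviation "sa_law x k \<equiv> traj S P n pol (A.act_law x) k"

lemma sa_law_in_prob_algebra: "x \<in> space (aug_space S n) \<Longrightarrow> sa_law x k \<in> space (prob_algebra A.SA)"
  by (rule A.traj_in_prob_algebra[OF measurable_space[OF A.measurable_act_law]])

lemma sa_law_prob:
  assumes "x \<in> space (aug_space S n)"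
  shows "prob_space (sa_law x k)" "sets (sa_law x k) = sets A.SA" "space (sa_law x k) = space A.SA"
  using prob_algebra_memberD[OF sa_law_in_prob_algebra[OF assms]] by auto

lemma sa_law_integrable:
  fixes f :: "_ \<Rightarrow> real"
  assumes "x \<in> space (aug_space S n)" and "f \<in> borel_measurable A.SA"
    and "\<And>z. z \<in> space A.SA \<Longrightarrow> \<bar>f z\<bar> \<le> C"
  shows "integrable (sa_law x k) f" and "\<bar>\<integral>z. f z \<partial>sa_law x k\<bar> \<le> C"
  using prob_algebra_integrable_bounded[OF sa_law_in_prob_algebra[OF assms(1)] assms(2,3)] by auto

definition Q_gap_at :: "('s, 'a) aug_state \<Rightarrow> nat \<Rightarrow> real" where
  "Q_gap_at x k = (\<integral>z. Q_gap z \<partial>sa_law x k)"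
definition pol_gap_at :: "('s, 'a) aug_state \<Rightarrow> nat \<Rightarrow> real" where
  "pol_gap_at x k = (\<integral>z. pol_gap (fst z) \<partial>sa_law x k)"

lemma measurable_pol_gap_fst: "(\<lambda>z. pol_gap (fst z)) \<in> borel_measurable A.SA"
  using measurable_pol_gap by measurable

lemma pol_gap_fst_abs_le: "z \<in> space A.SA \<Longrightarrow> \<bar>pol_gap (fst z)\<bar> \<le> 2 * Qmax"
  by (rule pol_gap_abs_le) (auto simp: space_pair_measure)

lemma Q_gap_at_abs_le: "x \<in> space (aug_space S n) \<Longrightarrow> \<bar>Q_gap_at x k\<bar> \<le> 2 * Qmax"
  unfolding Q_gap_at_def by (rule sa_law_integrable(2)[OF _ measurable_Q_gap Q_gap_abs_le])

lemma Q_gap_at_Suc: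
  assumes x: "x \<in> space (aug_space S n)"
  shows "Q_gap_at x k = \<gamma> * (pol_gap_at x (Suc k) + Q_gap_at x (Suc k))"
proof -
  note mf = sa_law_prob[OF x, of k]
  have gaps_meas: "(\<lambda>z'. pol_gap (fst z') + Q_gap z') \<in> borel_measurable A.SA"
    using measurable_pol_gap measurable_Q_gap by measurable
  have gaps_bound: "\<bar>pol_gap (fst z') + Q_gap z'\<bar> \<le> 4 * Qmax" if "z' \<in> space A.SA" for z'
    using pol_gap_fst_abs_le[OF that] Q_gap_abs_le[OF that] by linarith
  have "Q_gap_at x k = (\<integral>z. \<gamma> * (\<integral>z'. pol_gap (fst z') + Q_gap z' \<partial>A.step z) \<partial>sa_law x k)"
    unfolding Q_gap_at_def by (rule Bochner_Integration.integral_cong[OF refl]) (simp add: mf(3) Q_gap_recursion)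
  also have "\<dots> = \<gamma> * (\<integral>z. (\<integral>z'. pol_gap (fst z') + Q_gap z' \<partial>A.step z) \<partial>sa_law x k)" by simp
  also have "(\<integral>z. (\<integral>z'. pol_gap (fst z') + Q_gap z' \<partial>A.step z) \<partial>sa_law x k) = (\<integral>z'. pol_gap (fst z') + Q_gap z' \<partial>bind (sa_law x k) A.step)"
  proof (rule integral_bind[where K=A.SA and B="4 * Qmax" and B'=1, symmetric])
    show "A.step \<in> sa_law x k \<rightarrow>\<^sub>M subprob_algebra A.SA"
      by (simp add: measurable_cong_sets[OF mf(2) refl] A.measurable_step_subprob)
    show "finite_measure (sa_law x k)" using mf(1) prob_space_def by blast
    show "AE z in sa_law x k. emeasure (A.step z) (space (A.step z)) \<le> ennreal 1"
      by (rule AE_kernel_emeasure_le_1[where N=A.SA]) (simp add: mf(3) measurable_space[OF A.measurable_step])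
    show "(\<lambda>z'. pol_gap (fst z') + Q_gap z') \<in> borel_measurable A.SA" by (rule gaps_meas)
    show "\<And>z'. z' \<in> space A.SA \<Longrightarrow> \<bar>pol_gap (fst z') + Q_gap z'\<bar> \<le> 4 * Qmax" by (rule gaps_bound)
  qed
  also have "bind (sa_law x k) A.step = sa_law x (Suc k)" by simp
  also have "(\<integral>z'. pol_gap (fst z') + Q_gap z' \<partial>sa_law x (Suc k)) = pol_gap_at x (Suc k) + Q_gap_at x (Suc k)"
  proof -
    have i1: "integrable (sa_law x (Suc k)) (\<lambda>z. pol_gap (fst z))"
      by (rule sa_law_integrable(1)[OF x measurable_pol_gap_fst pol_gap_fst_abs_le])
    have i2: "integrable (sa_law x (Suc k)) Q_gap"
      by (rule sa_law_integrable(1)[OF x measurable_Q_gap Q_gap_abs_le])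
    show ?thesis unfolding pol_gap_at_def Q_gap_at_def by (rule Bochner_Integration.integral_add[OF i1 i2])
  qed
  finally show ?thesis .
qed

lemma Q_gap_at_unroll:
  assumes x: "x \<in> space (aug_space S n)"
  shows "Q_gap_at x 0 = (\<Sum>j<N. \<gamma> ^ Suc j * pol_gap_at x (Suc j)) + \<gamma> ^ N * Q_gap_at x N"
proof (induction N)
  case 0 then show ?case by simp
next
  case (Suc N)
  then show ?case using Q_gap_at_Suc[OF x, of N] by (simp add: algebra_simps)
qed

lemma Q_gap_at_sums:
  assumes x: "x \<in> space (aug_space S n)"
  shows "(\<lambda>j. \<gamma> ^ Suc j * pol_gap_at x (Suc j)) sums Q_gap_at x 0"
proof -
  have t0: "(\<lambda>N. \<gamma> ^ N * Q_gap_at x N) \<longlonglongrightarrow> 0"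
  proof (rule Lim_null_comparison)
    show "\<forall>\<^sub>F N in sequentially. norm (\<gamma> ^ N * Q_gap_at x N) \<le> \<gamma> ^ N * (2 * Qmax)"
    proof (intro always_eventually allI)
      fix N
      have "\<gamma> ^ N * \<bar>Q_gap_at x N\<bar> \<le> \<gamma> ^ N * (2 * Qmax)"
        using Q_gap_at_abs_le[OF x, of N] discount by (intro mult_left_mono) auto
      then show "norm (\<gamma> ^ N * Q_gap_at x N) \<le> \<gamma> ^ N * (2 * Qmax)" using discount by (simp add: abs_mult)
    qed
    show "(\<lambda>N. \<gamma> ^ N * (2 * Qmax)) \<longlonglongrightarrow> 0"
      using discount by (intro tendsto_mult_left_zero LIMSEQ_power_zero) simp
  qed
  have "(\<lambda>N. Q_gap_at x 0 - \<gamma> ^ N * Q_gap_at x N) \<longlonglongrightarrow> Q_gap_at x 0 - 0"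
    by (intro tendsto_diff tendsto_const t0)
  moreover have "(\<lambda>N. Q_gap_at x 0 - \<gamma> ^ N * Q_gap_at x N) = (\<lambda>N. \<Sum>j<N. \<gamma> ^ Suc j * pol_gap_at x (Suc j))"
    using Q_gap_at_unroll[OF x] by (intro ext) (simp add: algebra_simps)
  ultimately have "(\<lambda>N. \<Sum>j<N. \<gamma> ^ Suc j * pol_gap_at x (Suc j)) \<longlonglongrightarrow> Q_gap_at x 0" by simp
  then show ?thesis by (simp add: sums_def)
qed

lemma integrable_Qtau_db: "xh \<in> space (aug_space S n) \<Longrightarrow> integrable (db xh) (\<lambda>xt. T.Q (xt, a))"
  by (rule prob_space_integrable_bounded[OF db_prob(1), where C=Qmax])
    (auto simp: measurable_cong_sets[OF db_prob(2) refl] measurable_Qtau_state db_prob(3) Qtau_abs_le)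

lemma integral_Q_diff_eq_Q_gap_at:
  assumes x: "x \<in> space (aug_space S n)"
  shows "(\<integral>a. (\<integral>xt. T.Q (xt, a) - A.Q (x, a) \<partial>db x) \<partial>pol x) = Q_gap_at x 0"
proof -
  interpret pd: prob_space "db x" by (rule db_prob(1)[OF x])
  have "(\<integral>xt. T.Q (xt, a) - A.Q (x, a) \<partial>db x) = Q_gap (x, a)" for a
    using integrable_Qtau_db[OF x, of a] pd.prob_space by (simp add: Q_gap_def Qtau_bel_def)
  then have "(\<integral>a. (\<integral>xt. T.Q (xt, a) - A.Q (x, a) \<partial>db x) \<partial>pol x) = (\<integral>a. Q_gap (x, a) \<partial>pol x)" by simp
  also have "\<dots> = (\<integral>z. Q_gap z \<partial>A.act_law x)" by (rule A.integral_act_law[OF x measurable_Q_gap, symmetric])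
  finally show ?thesis by (simp add: Q_gap_at_def)
qed

lemma space_visitation:
  assumes x': "x' \<in> space (aug_space S n)"
  shows "space (visitation S P \<gamma> n pol x') = space (aug_space S n)"
proof -
  have "sets (visitation S P \<gamma> n pol x') = sets (aug_space S n)"
    unfolding visitation_def by (rule sets_bind) (simp_all add: state_law_def)
  then show ?thesis by (rule sets_eq_imp_space_eq)
qed

lemma pol_gap_le_wasserstein1:
  assumes L: "0 < L" and Lip: "\<forall>xt\<in>space (aug_space S m). L-lipschitz_on UNIV (\<lambda>a. T.Q (xt, a))"
    and xh: "xh \<in> space (aug_space S n)"
  shows "ennreal (max 0 (pol_gap xh / L)) \<le> (\<integral>\<^sup>+ xht. wasserstein1 (polt xht) (pol xh) \<partial>db xh)"
proof -
  have Jm: "(\<lambda>xt. Qtau_pol (xh, xt)) \<in> borel_measurable (aug_space S m)"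
    using measurable_compose[OF _ measurable_Qtau_pol, of "\<lambda>xt. (xh, xt)"] xh by simp
  have ik: "integrable (db xh) (\<lambda>xt. (Vtau xt - Qtau_pol (xh, xt)) / L)"
  proof (rule prob_space_integrable_bounded[OF db_prob(1)[OF xh], where C="2 * Qmax / L"])
    show "(\<lambda>xt. (Vtau xt - Qtau_pol (xh, xt)) / L) \<in> borel_measurable (db xh)"
      using measurable_Vtau Jm by (simp add: measurable_cong_sets[OF db_prob(2)[OF xh] refl])
    fix xt assume "xt \<in> space (db xh)"
    then have xt: "xt \<in> space (aug_space S m)" using db_prob(3)[OF xh] by simp
    have "\<bar>Vtau xt - Qtau_pol (xh, xt)\<bar> \<le> 2 * Qmax" using Vtau_abs_le[OF xt] Qtau_pol_abs_le[OF xh xt] by linarith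
    then have "\<bar>Vtau xt - Qtau_pol (xh, xt)\<bar> / L \<le> 2 * Qmax / L" using L by (intro divide_right_mono) auto
    then show "\<bar>(Vtau xt - Qtau_pol (xh, xt)) / L\<bar> \<le> 2 * Qmax / L" using L by (simp add: abs_divide)
  qed
  have "ennreal (max 0 (pol_gap xh / L)) = ennreal (\<integral>xt. (Vtau xt - Qtau_pol (xh, xt)) / L \<partial>db xh)"
    by (simp add: ennreal_max_0 pol_gap_def)
  also have "\<dots> \<le> (\<integral>\<^sup>+ xt. ennreal ((Vtau xt - Qtau_pol (xh, xt)) / L) \<partial>db xh)"
    by (rule ennreal_integral_le_nn_integral[OF ik])
  also have "\<dots> \<le> (\<integral>\<^sup>+ xht. wasserstein1 (polt xht) (pol xh) \<partial>db xh)"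
  proof (rule nn_integral_mono)
    fix xt assume "xt \<in> space (db xh)"
    then have xt: "xt \<in> space (aug_space S m)" using db_prob(3)[OF xh] by simp
    have "ennreal (((\<integral>a. T.Q (xt, a) \<partial>polt xt) - (\<integral>a. T.Q (xt, a) \<partial>pol xh)) / L) \<le> wasserstein1 (polt xt) (pol xh)"
      by (rule wasserstein1_ge_integral_diff[OF L _ _ measurable_space[OF polt xt] measurable_space[OF pol xh], where C=Qmax])
        (use Lip xt Qtau_abs_le[OF xt] in auto)
    then show "ennreal ((Vtau xt - Qtau_pol (xh, xt)) / L) \<le> wasserstein1 (polt xt) (pol xh)"
      by (simp add: Vtau_def Qtau_pol_def)
  qed
  finally show ?thesis .
qed

lemma pol_gap_zero:
  assumes Lip: "\<forall>xt\<in>space (aug_space S m). 0-lipschitz_on UNIV (\<lambda>a. T.Q (xt, a))"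
    and xh: "xh \<in> space (aug_space S n)"
  shows "pol_gap xh = 0"
proof -
  have "Vtau xt - Qtau_pol (xh, xt) = 0" if xt: "xt \<in> space (aug_space S m)" for xt
  proof -
    have c: "T.Q (xt, a) = T.Q (xt, undefined)" for a
      using Lip xt by (auto simp: lipschitz_on_def)
    have "Vtau xt = (\<integral>a. T.Q (xt, undefined) \<partial>polt xt)"
      unfolding Vtau_def by (rule Bochner_Integration.integral_cong[OF refl]) (rule c)
    also have "\<dots> = T.Q (xt, undefined)" using prob_space.prob_space[OF T.pol_prob(1)[OF xt]] by simp
    finally have h1: "Vtau xt = T.Q (xt, undefined)" .
    have "Qtau_pol (xh, xt) = (\<integral>a. T.Q (xt, undefined) \<partial>pol xh)"
      unfolding Qtau_pol_def by (simp only: fst_conv snd_conv) (rule Bochner_Integration.integral_cong[OF refl], rule c)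
    also have "\<dots> = T.Q (xt, undefined)" using prob_space.prob_space[OF A.pol_prob(1)[OF xh]] by simp
    finally have h2: "Qtau_pol (xh, xt) = T.Q (xt, undefined)" .
    show ?thesis using h1 h2 by simp
  qed
  then have "pol_gap xh = (\<integral>xt. 0 \<partial>db xh)"
    unfolding pol_gap_def by (intro Bochner_Integration.integral_cong refl) (simp add: db_prob(3)[OF xh])
  then show ?thesis by simp
qed

text \<open>Clipping at \<open>0\<close> makes the integrand nonnegative, so that it can be compared with the
  \<open>ennreal\<close>-valued Wasserstein integral.\<close>

definition clipped_gap :: "real \<Rightarrow> ('s, 'a) aug_state \<Rightarrow> nat \<Rightarrow> real" where
  "clipped_gap L x k = (\<integral>z. max 0 (pol_gap (fst z) / L) \<partial>sa_law x k)"

lemma measurable_clipped_gap_integrand: "(\<lambda>z. max 0 (pol_gap (fst z) / L)) \<in> borel_measurable A.SA"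
  using measurable_pol_gap by measurable

lemma clipped_gap_integrand_abs_le:
  "0 < L \<Longrightarrow> z \<in> space A.SA \<Longrightarrow> \<bar>max 0 (pol_gap (fst z) / L)\<bar> \<le> 2 * Qmax / L"
  by (intro abs_max_0_divide_le pol_gap_fst_abs_le)

lemma integrable_clipped_gap_integrand:
  "x \<in> space (aug_space S n) \<Longrightarrow> 0 < L \<Longrightarrow> integrable (sa_law x k) (\<lambda>z. max 0 (pol_gap (fst z) / L))"
  by (rule sa_law_integrable(1)[OF _ measurable_clipped_gap_integrand clipped_gap_integrand_abs_le])

lemma clipped_gap_nonneg: "0 \<le> clipped_gap L x k"
  unfolding clipped_gap_def by (rule integral_nonneg_AE) auto

lemma clipped_gap_le: "x \<in> space (aug_space S n) \<Longrightarrow> 0 < L \<Longrightarrow> clipped_gap L x k \<le> 2 * Qmax / L"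
  unfolding clipped_gap_def
  using sa_law_integrable(2)[OF _ measurable_clipped_gap_integrand clipped_gap_integrand_abs_le] by fastforce

lemma summable_clipped_gap:
  assumes x: "x \<in> space (aug_space S n)" and L: "0 < L"
  shows "summable (\<lambda>j. (1 - \<gamma>) * \<gamma> ^ j * clipped_gap L x (Suc j))"
proof -
  have "summable (\<lambda>j. \<gamma> ^ j * ((1 - \<gamma>) * clipped_gap L x (Suc j)))"
  proof (rule summable_power_mult[OF discount_range, where C="(1 - \<gamma>) * (2 * Qmax / L)"])
    fix j
    have "(1 - \<gamma>) * clipped_gap L x (Suc j) \<le> (1 - \<gamma>) * (2 * Qmax / L)"
      using clipped_gap_le[OF x L] discount by (intro mult_left_mono) auto
    moreover have "0 \<le> (1 - \<gamma>) * clipped_gap L x (Suc j)" using clipped_gap_nonneg discount by simp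
    ultimately show "\<bar>(1 - \<gamma>) * clipped_gap L x (Suc j)\<bar> \<le> (1 - \<gamma>) * (2 * Qmax / L)" by linarith
  qed
  then show ?thesis by (simp add: mult_ac)
qed

lemma pol_gap_at_le_clipped_gap:
  assumes x: "x \<in> space (aug_space S n)" and L: "0 < L"
  shows "pol_gap_at x k \<le> L * clipped_gap L x k"
proof -
  have "pol_gap_at x k \<le> (\<integral>z. L * max 0 (pol_gap (fst z) / L) \<partial>sa_law x k)"
    unfolding pol_gap_at_def
  proof (rule integral_mono)
    show "integrable (sa_law x k) (\<lambda>z. pol_gap (fst z))"
      by (rule sa_law_integrable(1)[OF x measurable_pol_gap_fst pol_gap_fst_abs_le])
    show "integrable (sa_law x k) (\<lambda>z. L * max 0 (pol_gap (fst z) / L))"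
      by (rule integrable_mult_right[OF integrable_clipped_gap_integrand[OF x L]])
    fix z
    have "pol_gap (fst z) = L * (pol_gap (fst z) / L)" using L by simp
    also have "\<dots> \<le> L * max 0 (pol_gap (fst z) / L)" using L by (intro mult_left_mono) auto
    finally show "pol_gap (fst z) \<le> L * max 0 (pol_gap (fst z) / L)" .
  qed
  then show ?thesis by (simp add: clipped_gap_def)
qed

lemma discounted_clipped_gap_le:
  assumes x: "x \<in> space (aug_space S n)" and L: "0 < L"
    and Lip: "\<forall>xt\<in>space (aug_space S m). L-lipschitz_on UNIV (\<lambda>a. T.Q (xt, a))"
  shows "ennreal (\<Sum>j. (1 - \<gamma>) * \<gamma> ^ j * clipped_gap L x (Suc j))
    \<le> (\<integral>\<^sup>+ a. (\<integral>\<^sup>+ x'. (\<integral>\<^sup>+ xh. (\<integral>\<^sup>+ xht. wasserstein1 (polt xht) (pol xh) \<partial>db xh)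
          \<partial>visitation S P \<gamma> n pol x') \<partial>cd_kernel S P n x a) \<partial>pol x)"
proof -
  have weight: "0 \<le> (1 - \<gamma>) * \<gamma> ^ j" for j :: nat using discount by simp
  have gap_meas: "(\<lambda>xh. ennreal (max 0 (pol_gap xh / L))) \<in> borel_measurable (aug_space S n)"
    using measurable_pol_gap by measurable
  have "ennreal (\<Sum>j. (1 - \<gamma>) * \<gamma> ^ j * clipped_gap L x (Suc j))
      = (\<Sum>j. ennreal ((1 - \<gamma>) * \<gamma> ^ j * clipped_gap L x (Suc j)))"
    by (rule suminf_ennreal2[symmetric]) (use summable_clipped_gap[OF x L] clipped_gap_nonneg weight in auto)
  also have "\<dots> = (\<Sum>j. ennreal ((1 - \<gamma>) * \<gamma> ^ j)
      * (\<integral>\<^sup>+ z. ennreal (max 0 (pol_gap (fst z) / L)) \<partial>sa_law x (Suc j)))"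
  proof (rule suminf_cong)
    fix j
    have "(\<integral>\<^sup>+ z. ennreal (max 0 (pol_gap (fst z) / L)) \<partial>sa_law x (Suc j)) = ennreal (clipped_gap L x (Suc j))"
      unfolding clipped_gap_def by (rule nn_integral_eq_integral[OF integrable_clipped_gap_integrand[OF x L]]) auto
    then show "ennreal ((1 - \<gamma>) * \<gamma> ^ j * clipped_gap L x (Suc j)) = ennreal ((1 - \<gamma>) * \<gamma> ^ j)
        * (\<integral>\<^sup>+ z. ennreal (max 0 (pol_gap (fst z) / L)) \<partial>sa_law x (Suc j))"
      using weight clipped_gap_nonneg by (simp add: ennreal_mult)
  qed
  also have "\<dots> = (\<integral>\<^sup>+ a. (\<integral>\<^sup>+ x'. (\<integral>\<^sup>+ xh. ennreal (max 0 (pol_gap xh / L))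
      \<partial>visitation S P \<gamma> n pol x') \<partial>cd_kernel S P n x a) \<partial>pol x)"
    by (rule A.nn_integral_discounted_traj[OF x gap_meas])
  also have "\<dots> \<le> (\<integral>\<^sup>+ a. (\<integral>\<^sup>+ x'. (\<integral>\<^sup>+ xh. (\<integral>\<^sup>+ xht. wasserstein1 (polt xht) (pol xh) \<partial>db xh)
          \<partial>visitation S P \<gamma> n pol x') \<partial>cd_kernel S P n x a) \<partial>pol x)"
  proof (intro nn_integral_mono)
    fix a x' xh assume "x' \<in> space (cd_kernel S P n x a)" and xh: "xh \<in> space (visitation S P \<gamma> n pol x')"
    then have x': "x' \<in> space (aug_space S n)" using cd_kernel_prob(3)[OF x] by simp
    have "xh \<in> space (aug_space S n)" using xh space_visitation[OF x'] by simp
    then show "ennreal (max 0 (pol_gap xh / L)) \<le> (\<integral>\<^sup>+ xht. wasserstein1 (polt xht) (pol xh) \<partial>db xh)"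
      by (rule pol_gap_le_wasserstein1[OF L Lip])
  qed
  finally show ?thesis .
qed

lemma Q_gap_at_le_wasserstein1:
  assumes x: "x \<in> space (aug_space S n)" and L: "0 < L"
    and Lip: "\<forall>xt\<in>space (aug_space S m). L-lipschitz_on UNIV (\<lambda>a. T.Q (xt, a))"
  shows "ereal (Q_gap_at x 0)
    \<le> ereal (\<gamma> * L / (1 - \<gamma>)) *
      enn2ereal (\<integral>\<^sup>+ a. (\<integral>\<^sup>+ x'. (\<integral>\<^sup>+ xh. (\<integral>\<^sup>+ xht. wasserstein1 (polt xht) (pol xh) \<partial>db xh)
          \<partial>visitation S P \<gamma> n pol x') \<partial>cd_kernel S P n x a) \<partial>pol x)"
    (is "_ \<le> ereal ?c * enn2ereal ?I")
proof -
  define T where "T = (\<Sum>j. (1 - \<gamma>) * \<gamma> ^ j * clipped_gap L x (Suc j))"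
  have rescale: "(\<lambda>j. \<gamma> ^ Suc j * (L * clipped_gap L x (Suc j)))
      = (\<lambda>j. ?c * ((1 - \<gamma>) * \<gamma> ^ j * clipped_gap L x (Suc j)))"
    using discount by (intro ext) (simp add: field_simps)
  have sums_T: "(\<lambda>j. \<gamma> ^ Suc j * (L * clipped_gap L x (Suc j))) sums (?c * T)"
    unfolding rescale T_def by (rule sums_mult[OF summable_sums[OF summable_clipped_gap[OF x L]]])
  have le_T: "Q_gap_at x 0 \<le> ?c * T"
    by (rule sums_le[OF _ Q_gap_at_sums[OF x] sums_T])
      (use pol_gap_at_le_clipped_gap[OF x L] discount in \<open>auto intro: mult_left_mono\<close>)
  have "0 \<le> T" unfolding T_def
    using clipped_gap_nonneg discount by (intro suminf_nonneg summable_clipped_gap[OF x L]) simp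
  have "enn2ereal (ennreal T) \<le> enn2ereal ?I"
    unfolding T_def less_eq_ennreal.rep_eq[symmetric] by (rule discounted_clipped_gap_le[OF x L Lip])
  then have T_le: "ereal T \<le> enn2ereal ?I" using \<open>0 \<le> T\<close> by simp
  have "ereal (Q_gap_at x 0) \<le> ereal ?c * ereal T" using le_T by simp
  also have "\<dots> \<le> ereal ?c * enn2ereal ?I"
    by (rule ereal_mult_left_mono[OF T_le]) (use discount L in simp)
  finally show ?thesis .
qed

text \<open>For \<open>L = 0\<close> the right-hand side of the theorem is \<open>0\<close> even if the Wasserstein integral
  is infinite, so this case needs its own argument.\<close>

lemma Q_gap_at_eq_0:
  assumes x: "x \<in> space (aug_space S n)"
    and Lip: "\<forall>xt\<in>space (aug_space S m). 0-lipschitz_on UNIV (\<lambda>a. T.Q (xt, a))"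
  shows "Q_gap_at x 0 = 0"
proof -
  have gap_0: "pol_gap (fst z) = 0" if "z \<in> space A.SA" for z
    by (rule pol_gap_zero[OF Lip]) (use that in \<open>auto simp: space_pair_measure\<close>)
  have "pol_gap_at x k = 0" for k
  proof -
    have "pol_gap_at x k = (\<integral>z. 0 \<partial>sa_law x k)"
      unfolding pol_gap_at_def
      by (rule Bochner_Integration.integral_cong[OF refl]) (use gap_0 sa_law_prob(3)[OF x] in auto)
    then show ?thesis by simp
  qed
  then show ?thesis using Q_gap_at_sums[OF x] by (simp add: sums_iff)
qed

lemma expected_Q_difference_le:
  assumes x: "x \<in> space (aug_space S n)"
    and Lip: "\<forall>xt \<in> space (aug_space S m). L-lipschitz_on UNIV (\<lambda>a. Q_fun S P R \<gamma> m polt xt a)"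
  shows "ereal (\<integral>a. (\<integral>xt. Q_fun S P R \<gamma> m polt xt a - Q_fun S P R \<gamma> n pol x a \<partial>db x) \<partial>pol x)
    \<le> ereal (\<gamma> * L / (1 - \<gamma>)) *
      enn2ereal (\<integral>\<^sup>+ a. (\<integral>\<^sup>+ x'. (\<integral>\<^sup>+ xh. (\<integral>\<^sup>+ xht. wasserstein1 (polt xht) (pol xh) \<partial>db xh)
          \<partial>visitation S P \<gamma> n pol x') \<partial>cd_kernel S P n x a) \<partial>pol x)"
proof -
  have Lip': "\<forall>xt \<in> space (aug_space S m). L-lipschitz_on UNIV (\<lambda>a. T.Q (xt, a))"
    using Lip by (simp add: T.Q_def)
  have lhs: "(\<integral>a. (\<integral>xt. Q_fun S P R \<gamma> m polt xt a - Q_fun S P R \<gamma> n pol x a \<partial>db x) \<partial>pol x) = Q_gap_at x 0"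
    using integral_Q_diff_eq_Q_gap_at[OF x] by (simp add: T.Q_def A.Q_def)
  have "(fst x, restrict (\<lambda>_. undefined) {..<m}) \<in> space (aug_space S m)"
    using x by (simp add: space_aug_space restrict_in_act_space)
  then have "0 \<le> L" using Lip' by (auto simp: lipschitz_on_def)
  then consider "L = 0" | "0 < L" by linarith
  then show ?thesis
  proof cases
    case 1
    then show ?thesis using Q_gap_at_eq_0[OF x] Lip' by (simp add: lhs zero_ereal_def[symmetric])
  next
    case 2
    then show ?thesis using Q_gap_at_le_wasserstein1[OF x 2 Lip'] by (simp add: lhs)
  qed
qed

end

theorem mainTheorem3:
  fixes S :: "'s measure"
    and P :: "'s \<Rightarrow> 'a::metric_space \<Rightarrow> 's measure"
    and R :: "'s \<Rightarrow> 'a \<Rightarrow> real"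
    and \<gamma> L\<^sub>Q :: real
    and \<Delta> \<Delta>\<^sub>\<tau> :: nat
    and \<pi> \<pi>\<^sub>\<tau> :: "('s \<times> (nat \<Rightarrow> 'a)) \<Rightarrow> 'a measure"
    and x :: "'s \<times> (nat \<Rightarrow> 'a)"
  assumes gamma: "0 < \<gamma>" "\<gamma> < 1"
    and delay: "\<Delta>\<^sub>\<tau> < \<Delta>"
    and P_kernel: "(\<lambda>(s, a). P s a) \<in> S \<Otimes>\<^sub>M borel \<rightarrow>\<^sub>M prob_algebra S"
    and R_meas: "(\<lambda>(s, a). R s a) \<in> borel_measurable (S \<Otimes>\<^sub>M borel)"
    and R_bounded: "\<exists>B. \<forall>s a. \<bar>R s a\<bar> \<le> B"
    and pi_kernel: "\<pi> \<in> aug_space S \<Delta> \<rightarrow>\<^sub>M prob_algebra borel"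
    and pi_tau_kernel: "\<pi>\<^sub>\<tau> \<in> aug_space S \<Delta>\<^sub>\<tau> \<rightarrow>\<^sub>M prob_algebra borel"
    and Lipschitz: "\<forall>x\<^sub>\<tau> \<in> space (aug_space S \<Delta>\<^sub>\<tau>).
                      L\<^sub>Q-lipschitz_on UNIV (\<lambda>a. Q_fun S P R \<gamma> \<Delta>\<^sub>\<tau> \<pi>\<^sub>\<tau> x\<^sub>\<tau> a)"
    and x_in: "x \<in> space (aug_space S \<Delta>)"
  shows "ereal (\<integral>a. (\<integral>x\<^sub>\<tau>. Q_fun S P R \<gamma> \<Delta>\<^sub>\<tau> \<pi>\<^sub>\<tau> x\<^sub>\<tau> a - Q_fun S P R \<gamma> \<Delta> \<pi> x a
                       \<partial>delayed_belief S P \<Delta> \<Delta>\<^sub>\<tau> x) \<partial>\<pi> x)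
         \<le> ereal (\<gamma> * L\<^sub>Q / (1 - \<gamma>)) *
           enn2ereal (\<integral>\<^sup>+ a. (\<integral>\<^sup>+ x'. (\<integral>\<^sup>+ xh. (\<integral>\<^sup>+ xh\<^sub>\<tau>.
                 wasserstein1 (\<pi>\<^sub>\<tau> xh\<^sub>\<tau>) (\<pi> xh)
               \<partial>delayed_belief S P \<Delta> \<Delta>\<^sub>\<tau> xh)
             \<partial>visitation S P \<gamma> \<Delta> \<pi> x')
           \<partial>cd_kernel S P \<Delta> x a)
         \<partial>\<pi> x)"
proof -
  obtain B where B: "\<forall>s a. \<bar>R s a\<bar> \<le> B" using R_bounded by blast
  interpret delay_comparison S P R \<gamma> B \<Delta> \<Delta>\<^sub>\<tau> \<pi> \<pi>\<^sub>\<tau>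
    by unfold_locales (use P_kernel R_meas B gamma delay pi_kernel pi_tau_kernel in auto)
  show ?thesis by (rule expected_Q_difference_le[OF x_in Lipschitz])
qed

end
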